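(* Let $p\ge1$ be an integer and let $\bm U^n,\bm V^n\in\mathbb V_h$, $0\le n\le M$, satisfy for all such $n$ $$\|\bm U^n\|_h,\ \|\nabla_h\bm U^n\|_h,\ \|\Delta_h\bm U^n\|_h,\ \|\bm U^n\|_{h,\infty},\ \|\bm V^n\|_h,\ \|\nabla_h\bm V^n\|_h,\ \|\Delta_h\bm V^n\|_h,\ \|\bm V^n\|_{h,\infty}\le C.$$ Set $\bm\eta^n=\bm U^n-\bm V^n$, $\bm W^{n+\frac12}=\frac{\bm W^{n+1}+\bm W^n}{2}$ and $\hat{\bm W}^{n+\frac12}=\frac{3\bm W^n-\bm W^{n-1}}{2}$ for $\bm W\in\{\bm U,\bm V,\bm\eta\}$. Then $$\big\langle\mathbb D(\bm U^0)\bm U^{\frac12}-\mathbb D(\bm V^0)\bm V^{\frac12},\bm\eta^{\frac12}\big\rangle_h\le C\big(\|\bm\eta^0\|_h^2+\|\Delta_h\bm\eta^0\|_h^2+\|\bm\eta^1\|_h^2+\|\Delta_h\bm\eta^1\|_h^2\big),$$ and for $n=1,\dots,M-1$, $$\big\langle\mathbb D(\hat{\bm U}^{n+\frac12})\bm U^{n+\frac12}-\mathbb D(\hat{\bm V}^{n+\frac12})\bm V^{n+\frac12},\bm\eta^{n+\frac12}\big\rangle_h\le C\big(\|\bm\eta^{n-1}\|_h^2+\|\bm\eta^n\|_h^2+\|\bm\eta^{n+1}\|_h^2+\|\Delta_h\bm\eta^n\|_h^2+\|\Delta_h\bm\eta^{n+1}\|_h^2\big),$$ where $C$ denotes positive constants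 independent of $h_1,h_2$ and $\tau$.
   Context: $\Omega=[x_L,x_R]\times[y_L,y_R]$, $l_1=x_R-x_L$, $l_2=y_R-y_L$, $N_1,N_2$ even, $h_r=l_r/N_r$, grid points $x_{j_1}=x_L+j_1h_1$, $y_{j_2}=y_L+j_2h_2$, $0\le j_r\le N_r-1$. $\mathbb V_h$: doubly periodic grid functions identified with vectors $\bm U=(U_{0,0},U_{1,0},\dots,U_{N_1-1,0},U_{0,1},\dots,U_{N_1-1,N_2-1})^T$. $\langle\bm U,\bm V\rangle_h=h_1h_2\sum U_{j_1,j_2}V_{j_1,j_2}$, $\|\bm U\|_h^2=\langle\bm U,\bm U\rangle_h$, $\|\bm U\|_{h,\infty}=\max|U_{j_1,j_2}|$, $\|\nabla_h\bm U\|_h^2=\|\delta_x^+\bm U\|_h^2+\|\delta_y^+\bm U\|_h^2$ with forward differences $\delta_x^+U_{j_1,j_2}=(U_{j_1+1,j_2}-U_{j_1,j_2})/h_1$, $\delta_y^+U_{j_1,j_2}=(U_{j_1,j_2+1}-U_{j_1,j_2})/h_2$, and $\Delta_hU_{j_1,j_2}=\frac{U_{j_1+1,j_2}-2U_{j_1,j_2}+U_{j_1-1,j_2}}{h_1^2}+\frac{U_{j_1,j_2+1}-2U_{j_1,j_2}+U_{j_1,j_2-1}}{h_2^2}$. With $\mu_r=2\pi/l_r$, $g^{(1)}_k(x)=\frac1{N_1}\sum_{l=-N_1/2}^{N_1/2}\frac1{a_l}e^{\mathrm il\mu_1(x-x_k)}$, $a_l=1$ for $|l|<N_1/2$, $a_{\pm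 N_1/2}=2$ (similarly $g^{(2)}_k(y)$), $\bm D_s^x=(\frac{d^s}{dx^s}g^{(1)}_k(x_j))_{j,k}$, $\bm D_s^y=(\frac{d^s}{dy^s}g^{(2)}_k(y_j))_{j,k}$. $\mathbb B=\bm I_{N_2}\otimes\bm D_3^x+\bm D_2^y\otimes\bm D_1^x$, $\mathbb L_h=\bm I_{N_2}\otimes\bm D_1^x+\bm D_1^y\otimes\bm I_{N_1}$ ($\otimes$ Kronecker product), $\mathbb D(\bm W)=\mathbb B+\mathbb L_h+\frac1{p+2}(\mathrm{diag}(\bm W^p)\mathbb L_h+\mathbb L_h\mathrm{diag}(\bm W^p))$ with $\bm W^p$ the componentwise power. *)

theory Defs
  imports "HOL-Analysis.Analysis"
begin

text \<open>A grid function is stored as a vector U :: nat => real with the ordering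
  U_{j1,j2} = U (j1 + N1 * j2), 0 <= j1 < N1, 0 <= j2 < N2 (x index fastest),
  as in the paper. Entries with index >= N1*N2 are irrelevant.\<close>

definition gval :: "nat \<Rightarrow> nat \<Rightarrow> (nat \<Rightarrow> real) \<Rightarrow> int \<Rightarrow> int \<Rightarrow> real" where
  "gval N1 N2 U j1 j2 = U (nat (j1 mod int N1) + N1 * nat (j2 mod int N2))"

definition inner_h :: "real \<Rightarrow> real \<Rightarrow> nat \<Rightarrow> nat \<Rightarrow> (nat \<Rightarrow> real) \<Rightarrow> (nat \<Rightarrow> real) \<Rightarrow> real" where
  "inner_h h1 h2 N1 N2 U V = h1 * h2 * (\<Sum>m<N1 * N2. U m * V m)"

definition norm_h :: "real \<Rightarrow> real \<Rightarrow> nat \<Rightarrow> nat \<Rightarrow> (nat \<Rightarrow> real) \<Rightarrow> real" where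
  "norm_h h1 h2 N1 N2 U = sqrt (inner_h h1 h2 N1 N2 U U)"

definition norm_inf_h :: "nat \<Rightarrow> nat \<Rightarrow> (nat \<Rightarrow> real) \<Rightarrow> real" where
  "norm_inf_h N1 N2 U = Max ((\<lambda>m. \<bar>U m\<bar>) ` {..<N1 * N2})"

definition of_grid :: "nat \<Rightarrow> (int \<Rightarrow> int \<Rightarrow> real) \<Rightarrow> (nat \<Rightarrow> real)" where
  "of_grid N1 F = (\<lambda>m. F (int (m mod N1)) (int (m div N1)))"

definition dxp :: "real \<Rightarrow> nat \<Rightarrow> nat \<Rightarrow> (nat \<Rightarrow> real) \<Rightarrow> (nat \<Rightarrow> real)" where
  "dxp h1 N1 N2 U = of_grid N1 (\<lambda>j1 j2. (gval N1 N2 U (j1 + 1) j2 - gval N1 N2 U j1 j2) / h1)"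

definition dyp :: "real \<Rightarrow> nat \<Rightarrow> nat \<Rightarrow> (nat \<Rightarrow> real) \<Rightarrow> (nat \<Rightarrow> real)" where
  "dyp h2 N1 N2 U = of_grid N1 (\<lambda>j1 j2. (gval N1 N2 U j1 (j2 + 1) - gval N1 N2 U j1 j2) / h2)"

definition grad_norm_sq :: "real \<Rightarrow> real \<Rightarrow> nat \<Rightarrow> nat \<Rightarrow> (nat \<Rightarrow> real) \<Rightarrow> real" where
  "grad_norm_sq h1 h2 N1 N2 U =
     (norm_h h1 h2 N1 N2 (dxp h1 N1 N2 U))\<^sup>2 + (norm_h h1 h2 N1 N2 (dyp h2 N1 N2 U))\<^sup>2"

definition lap_h :: "real \<Rightarrow> real \<Rightarrow> nat \<Rightarrow> nat \<Rightarrow> (nat \<Rightarrow> real) \<Rightarrow> (nat \<Rightarrow> real)" where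
  "lap_h h1 h2 N1 N2 U = of_grid N1 (\<lambda>j1 j2.
      (gval N1 N2 U (j1 + 1) j2 - 2 * gval N1 N2 U j1 j2 + gval N1 N2 U (j1 - 1) j2) / h1\<^sup>2
    + (gval N1 N2 U j1 (j2 + 1) - 2 * gval N1 N2 U j1 j2 + gval N1 N2 U j1 (j2 - 1)) / h2\<^sup>2)"

definition a_coef :: "nat \<Rightarrow> int \<Rightarrow> real" where
  "a_coef N l = (if \<bar>l\<bar> = int (N div 2) then 2 else 1)"

text \<open>Trigonometric interpolation basis g_k on [x_L, x_L + len] with N points
  (N even); it is real-valued, Re just returns the real value.\<close>
definition gbasis :: "nat \<Rightarrow> real \<Rightarrow> real \<Rightarrow> nat \<Rightarrow> real \<Rightarrow> real" where
  "gbasis N xL len k x = Re ((1 / of_nat N) *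
     (\<Sum>l \<in> {- int (N div 2) .. int (N div 2)}.
        (1 / complex_of_real (a_coef N l)) *
        exp (\<i> * of_int l * complex_of_real (2 * pi / len) *
              complex_of_real (x - (xL + real k * len / real N)))))"

definition Dspec :: "nat \<Rightarrow> nat \<Rightarrow> real \<Rightarrow> real \<Rightarrow> nat \<Rightarrow> nat \<Rightarrow> real" where
  "Dspec s N xL len j k = ((deriv ^^ s) (gbasis N xL len k)) (xL + real j * len / real N)"

definition idm :: "nat \<Rightarrow> nat \<Rightarrow> real" where
  "idm i k = (if i = k then 1 else 0)"

text \<open>Kronecker product A \<otimes> B where B is N1 x N1: rows/cols indexed by i1 + N1 * i2.\<close>
definition kron :: "nat \<Rightarrow> (nat \<Rightarrow> nat \<Rightarrow> real) \<Rightarrow> (nat \<Rightarrow> nat \<Rightarrow> real) \<Rightarrow> nat \<Rightarrow> nat \<Rightarrow> real" where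
  "kron N1 A B i k = A (i div N1) (k div N1) * B (i mod N1) (k mod N1)"

definition mat_vec :: "nat \<Rightarrow> (nat \<Rightarrow> nat \<Rightarrow> real) \<Rightarrow> (nat \<Rightarrow> real) \<Rightarrow> (nat \<Rightarrow> real)" where
  "mat_vec n A v = (\<lambda>i. \<Sum>k<n. A i k * v k)"

definition Bmat :: "real \<Rightarrow> real \<Rightarrow> real \<Rightarrow> real \<Rightarrow> nat \<Rightarrow> nat \<Rightarrow> nat \<Rightarrow> nat \<Rightarrow> real" where
  "Bmat xL xR yL yR N1 N2 =
     (\<lambda>i k. kron N1 idm (Dspec 3 N1 xL (xR - xL)) i k
          + kron N1 (Dspec 2 N2 yL (yR - yL)) (Dspec 1 N1 xL (xR - xL)) i k)"

definition Lmat :: "real \<Rightarrow> real \<Rightarrow> real \<Rightarrow> real \<Rightarrow> nat \<Rightarrow> nat \<Rightarrow> nat \<Rightarrow> nat \<Rightarrow> real" where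
  "Lmat xL xR yL yR N1 N2 =
     (\<lambda>i k. kron N1 idm (Dspec 1 N1 xL (xR - xL)) i k
          + kron N1 (Dspec 1 N2 yL (yR - yL)) idm i k)"

definition Dmat :: "nat \<Rightarrow> real \<Rightarrow> real \<Rightarrow> real \<Rightarrow> real \<Rightarrow> nat \<Rightarrow> nat \<Rightarrow> (nat \<Rightarrow> real) \<Rightarrow> nat \<Rightarrow> nat \<Rightarrow> real" where
  "Dmat p xL xR yL yR N1 N2 W =
     (\<lambda>i k. Bmat xL xR yL yR N1 N2 i k + Lmat xL xR yL yR N1 N2 i k
          + (W i ^ p * Lmat xL xR yL yR N1 N2 i k + Lmat xL xR yL yR N1 N2 i k * W k ^ p)
            / (real p + 2))"

end

theory Submission
  imports Defs
begin

text \<open>Write \<open>E = X - Y\<close> for the difference of the two averaged solutions. The matrices \<open>B\<close>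
  and \<open>L\<^sub>h\<close> are skew-symmetric, since spectral differentiation matrices of odd order are
  antisymmetric; hence every term of \<open>\<langle>D(W)X - D(W')Y, E\<rangle>\<close> that is quadratic in \<open>E\<close>
  cancels, and only \<open>(\<langle>E (W\<^sup>p - W'\<^sup>p), L\<^sub>h Y\<rangle> - \<langle>(W\<^sup>p - W'\<^sup>p) Y, L\<^sub>h E\<rangle>) / (p + 2)\<close> survives.
  The factor \<open>W\<^sup>p - W'\<^sup>p\<close> is at most \<open>p M\<^sup>p\<^sup>-\<^sup>1 \<bar>W - W'\<bar>\<close> by the max-norm bounds,
  \<open>\<parallel>E\<parallel>\<^sub>\<infinity>\<close> is controlled by \<open>\<parallel>E\<parallel> + \<parallel>\<Delta>\<^sub>h E\<parallel>\<close> through a discrete Sobolev inequality, and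
  \<open>\<parallel>L\<^sub>h E\<parallel>\<^sup>2 \<le> 8 \<parallel>\<nabla>\<^sub>h E\<parallel>\<^sup>2 \<le> 8 \<parallel>E\<parallel> \<parallel>\<Delta>\<^sub>h E\<parallel>\<close>: by Parseval it suffices to compare symbols, and on the
  resolved modes the spectral symbol is at most twice the forward-difference symbol
  (Jordan's inequality), while the last step is summation by parts. Young's inequality turns the
  resulting products into the squared norms of the right-hand side.\<close>

section \<open>Periodic index arithmetic\<close>

definition succ_mod :: "nat \<Rightarrow> nat \<Rightarrow> nat" where
  "succ_mod N i = (i + 1) mod N"

definition pred_mod :: "nat \<Rightarrow> nat \<Rightarrow> nat" where
  "pred_mod N i = (i + N - 1) mod N"

lemma succ_mod_less: "i < N \<Longrightarrow> succ_mod N i < N"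
  unfolding succ_mod_def by simp

lemma pred_mod_less: "i < N \<Longrightarrow> pred_mod N i < N"
  unfolding pred_mod_def by simp

lemma pred_succ_mod: "i < N \<Longrightarrow> pred_mod N (succ_mod N i) = i"
  unfolding succ_mod_def pred_mod_def by (cases "Suc i = N") auto

lemma succ_pred_mod: "i < N \<Longrightarrow> succ_mod N (pred_mod N i) = i"
  unfolding succ_mod_def pred_mod_def by (cases i) (auto simp: mod_Suc_eq)

lemma sum_succ_mod: "(\<Sum>i<N. g (succ_mod N i)) = (\<Sum>i<N. g i)"
  by (rule sum.reindex_bij_witness[where i="pred_mod N" and j="succ_mod N"])
    (auto simp: pred_succ_mod succ_pred_mod succ_mod_less pred_mod_less)

lemma sum_lessThan_as_int: "(\<Sum>j<N. g (int j)) = (\<Sum>j\<in>{0..<int N}. g j)"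
  by (rule sum.reindex_bij_witness[where i="nat" and j="int"]) auto

lemma int_dvd_abs_less_eq_0: assumes "int N dvd t" "\<bar>t\<bar> < int N" shows "t = 0"
proof (rule ccontr)
  assume "t \<noteq> 0"
  then have "\<bar>int N\<bar> \<le> \<bar>t\<bar>" using dvd_imp_le_int assms(1) by blast
  then show False using assms(2) by simp
qed

section \<open>Roots of unity and the discrete Fourier transform\<close>

definition unit_root :: "nat \<Rightarrow> int \<Rightarrow> complex" where
  "unit_root N t = cis (2 * pi * real_of_int t / real N)"

lemma unit_root_add: "unit_root N (a + b) = unit_root N a * unit_root N b"
  unfolding unit_root_def by (simp add: cis_mult add_divide_distrib distrib_left)

lemma unit_root_of_nat_mult: "unit_root N (t * int i) = unit_root N t ^ i"
proof -
  have "unit_root N t ^ i = cis (real i * (2 * pi * real_of_int t / real N))"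
    unfolding unit_root_def by (rule Complex.DeMoivre)
  also have "real i * (2 * pi * real_of_int t / real N) = 2 * pi * real_of_int (t * int i) / real N"
    by simp
  finally show ?thesis unfolding unit_root_def by simp
qed

lemma cnj_unit_root: "cnj (unit_root N t) = unit_root N (- t)"
  unfolding unit_root_def by (simp add: cis_cnj)

lemma norm_unit_root [simp]: "norm (unit_root N t) = 1"
  unfolding unit_root_def by simp

lemma unit_root_multiple: assumes "N > 0" shows "unit_root N (int N * k) = 1"
proof -
  have "2 * pi * real_of_int (int N * k) / real N = 2 * pi * real_of_int k"
    using assms by (simp add: field_simps)
  then show ?thesis unfolding unit_root_def by simp
qed

lemma unit_root_eq_1_imp_dvd: assumes "N > 0" "unit_root N t = 1" shows "int N dvd t"
proof -
  have "cos (2 * pi * real_of_int t / real N) = 1"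
    using assms(2) unfolding unit_root_def by (metis cis.simps(1) one_complex.simps(1))
  then obtain n :: int where "2 * pi * real_of_int t / real N = real_of_int n * 2 * pi"
    by (meson cos_one_2pi_int)
  then have "real_of_int t = real_of_int (n * int N)" using assms(1)
    by (simp add: field_simps)
  then have "t = n * int N" by linarith
  then show ?thesis by simp
qed

lemma unit_root_cong: assumes "int N dvd (a - b)" shows "unit_root N a = unit_root N b"
proof (cases "N = 0")
  case True then show ?thesis by (simp add: unit_root_def)
next
  case False
  obtain q where "a = b + int N * q" using assms by (metis add.commute diff_add_cancel dvdE)
  then show ?thesis using unit_root_multiple[of N q] False by (simp add: unit_root_add)
qed

lemma unit_root_eq_cos_sin: "unit_root N t = complex_of_real (cos (2 * pi * real_of_int t / real N))
   + \<i> * complex_of_real (sin (2 * pi * real_of_int t / real N))"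
  unfolding unit_root_def by (simp add: cis.ctr complex_eq_iff)

lemma sum_unit_root_eq_0:
  assumes "N > 0" "\<not> int N dvd t"
  shows "(\<Sum>j\<in>{a..<a + int N}. unit_root N (t * j)) = 0"
proof -
  have "(\<Sum>j\<in>{a..<a + int N}. unit_root N (t * j)) = (\<Sum>i<N. unit_root N (t * (a + int i)))"
    by (rule sum.reindex_bij_witness[where i="\<lambda>i. a + int i" and j="\<lambda>j. nat (j - a)"]) auto
  also have "\<dots> = unit_root N (t * a) * (\<Sum>i<N. unit_root N t ^ i)"
    by (simp add: distrib_left unit_root_add unit_root_of_nat_mult sum_distrib_left)
  also have "(\<Sum>i<N. unit_root N t ^ i) = 0"
  proof -
    have "unit_root N t \<noteq> 1" using unit_root_eq_1_imp_dvd assms by blast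
    moreover have "unit_root N t ^ N = 1"
      using unit_root_of_nat_mult[of N t N] unit_root_multiple[OF assms(1), of t]
      by (simp add: mult.commute)
    ultimately show ?thesis by (simp add: geometric_sum)
  qed
  finally show ?thesis by simp
qed

lemma discrete_parseval:
  fixes c :: "int \<Rightarrow> complex"
  assumes N: "N > 0" and A: "finite A"
    and incongruent: "\<And>l l'. l \<in> A \<Longrightarrow> l' \<in> A \<Longrightarrow> int N dvd (l - l') \<Longrightarrow> l = l'"
  shows "(\<Sum>j\<in>{a..<a + int N}. (cmod (\<Sum>l\<in>A. c l * unit_root N (l * j)))\<^sup>2)
       = real N * (\<Sum>l\<in>A. (cmod (c l))\<^sup>2)"
proof -
  let ?J = "{a..<a + int N}"
  have "complex_of_real (\<Sum>j\<in>?J. (cmod (\<Sum>l\<in>A. c l * unit_root N (l * j)))\<^sup>2)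
      = (\<Sum>j\<in>?J. (\<Sum>l\<in>A. c l * unit_root N (l * j)) * cnj (\<Sum>l\<in>A. c l * unit_root N (l * j)))"
    by (simp only: of_real_sum complex_norm_square)
  also have "\<dots> = (\<Sum>j\<in>?J. \<Sum>l\<in>A. \<Sum>l'\<in>A. c l * cnj (c l') * unit_root N ((l - l') * j))"
  proof (rule sum.cong[OF refl])
    fix j
    have e: "unit_root N (l * j) * unit_root N (- (l' * j)) = unit_root N ((l - l') * j)" for l l'
      by (simp add: algebra_simps flip: unit_root_add)
    show "(\<Sum>l\<in>A. c l * unit_root N (l * j)) * cnj (\<Sum>l\<in>A. c l * unit_root N (l * j)) =
      (\<Sum>l\<in>A. \<Sum>l'\<in>A. c l * cnj (c l') * unit_root N ((l - l') * j))"
      by (simp add: sum_product cnj_unit_root flip: e) (simp add: algebra_simps)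
  qed
  also have "\<dots> = (\<Sum>l\<in>A. \<Sum>l'\<in>A. c l * cnj (c l') * (\<Sum>j\<in>?J. unit_root N ((l - l') * j)))"
    by (simp add: sum_distrib_left sum.swap[of _ ?J])
  also have "\<dots> = (\<Sum>l\<in>A. \<Sum>l'\<in>A. if l' = l then c l * cnj (c l) * of_nat N else 0)"
  proof (intro sum.cong refl)
    fix l l' assume "l \<in> A" "l' \<in> A"
    show "c l * cnj (c l') * (\<Sum>j\<in>?J. unit_root N ((l - l') * j)) =
          (if l' = l then c l * cnj (c l) * of_nat N else 0)"
    proof (cases "l' = l")
      case True then show ?thesis by (simp add: unit_root_def)
    next
      case False
      then have "\<not> int N dvd (l - l')" using incongruent \<open>l \<in> A\<close> \<open>l' \<in> A\<close> by force
      then show ?thesis using sum_unit_root_eq_0[OF N] False by simp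
    qed
  qed
  also have "\<dots> = (\<Sum>l\<in>A. c l * cnj (c l) * of_nat N)"
    using A by (simp add: sum.delta)
  also have "\<dots> = (\<Sum>l\<in>A. complex_of_real (real N * (cmod (c l))\<^sup>2))"
    by (intro sum.cong refl) (simp only: of_real_mult complex_norm_square, simp)
  also have "\<dots> = complex_of_real (real N * (\<Sum>l\<in>A. (cmod (c l))\<^sup>2))"
    by (simp only: of_real_sum sum_distrib_left)
  finally show ?thesis using of_real_eq_iff by blast
qed

definition dft :: "nat \<Rightarrow> (nat \<Rightarrow> real) \<Rightarrow> int \<Rightarrow> complex" where
  "dft N f l = (\<Sum>k<N. complex_of_real (f k) * unit_root N (- (l * int k)))"

lemma dft_forward_difference:
  "dft N (\<lambda>k. (f (succ_mod N k) - f k) / h) l = (unit_root N l - 1) / complex_of_real h * dft N f l"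
proof -
  have shift: "unit_root N (- (l * int k)) = unit_root N l * unit_root N (- (l * int (succ_mod N k)))" for k
  proof -
    have "int N dvd (int (k + 1) mod int N - int (k + 1))"
      using mod_eq_dvd_iff[of "int (k + 1) mod int N" "int N" "int (k + 1)"] by simp
    then have "int N dvd l * (int (succ_mod N k) - int (k + 1))"
      unfolding succ_mod_def by (simp add: of_nat_mod)
    then have "int N dvd (- (l * int k) - (l + - (l * int (succ_mod N k))))"
      by (simp add: algebra_simps)
    then show ?thesis by (simp only: unit_root_cong flip: unit_root_add)
  qed
  have "dft N (\<lambda>k. f (succ_mod N k)) l
      = unit_root N l * (\<Sum>k<N. complex_of_real (f (succ_mod N k)) * unit_root N (- (l * int (succ_mod N k))))"
    unfolding dft_def sum_distrib_left
  proof (rule sum.cong[OF refl])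
    fix k
    show "complex_of_real (f (succ_mod N k)) * unit_root N (- (l * int k)) =
        unit_root N l * (complex_of_real (f (succ_mod N k)) * unit_root N (- (l * int (succ_mod N k))))"
      using shift[of k] by simp
  qed
  also have "\<dots> = unit_root N l * dft N f l"
    unfolding dft_def using sum_succ_mod[of "\<lambda>k. complex_of_real (f k) * unit_root N (- (l * int k))" N]
    by simp
  finally have shifted: "dft N (\<lambda>k. f (succ_mod N k)) l = unit_root N l * dft N f l" .
  have "dft N (\<lambda>k. (f (succ_mod N k) - f k) / h) l
      = (dft N (\<lambda>k. f (succ_mod N k)) l - dft N f l) / complex_of_real h"
    unfolding dft_def by (simp add: sum_subtractf sum_divide_distrib diff_divide_distrib algebra_simps)
  then show ?thesis
    unfolding shifted by (simp add: algebra_simps diff_divide_distrib)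
qed

section \<open>The Fourier spectral differentiation matrices\<close>

definition fourier_kernel :: "nat \<Rightarrow> nat \<Rightarrow> real \<Rightarrow> real \<Rightarrow> real" where
  "fourier_kernel s N len t = (1 / real N) * (\<Sum>l \<in> {- int (N div 2) .. int (N div 2)}.
      (1 / a_coef N l) * (of_int l * (2 * pi / len)) ^ s *
      cos (of_int l * (2 * pi / len) * t + real s * pi / 2))"

lemma gbasis_eq_fourier_kernel:
  "gbasis N xL len k x = fourier_kernel 0 N len (x - (xL + real k * len / real N))"
proof -
  have Re_scale: "Re (complex_of_real r * z) = r * Re z" for r z by simp
  have mode: "Re ((1 / complex_of_real (a_coef N l)) *
        exp (\<i> * of_int l * complex_of_real (2 * pi / len) * complex_of_real y))
      = (1 / a_coef N l) * cos (of_int l * (2 * pi / len) * y)" for l y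
  proof -
    have "\<i> * of_int l * complex_of_real (2 * pi / len) * complex_of_real y
        = \<i> * complex_of_real (of_int l * (2 * pi / len) * y)" by simp
    then have "exp (\<i> * of_int l * complex_of_real (2 * pi / len) * complex_of_real y)
        = cis (of_int l * (2 * pi / len) * y)" by (simp only: cis_conv_exp)
    moreover have "1 / complex_of_real (a_coef N l) = complex_of_real (1 / a_coef N l)" by simp
    ultimately show ?thesis by (simp only: Re_scale cis.sel)
  qed
  have "1 / complex_of_nat N = complex_of_real (1 / real N)" by simp
  then show ?thesis unfolding gbasis_def fourier_kernel_def
    by (simp only: Re_scale Re_sum mode) simp
qed

lemma DERIV_fourier_kernel:
  "DERIV (\<lambda>x. fourier_kernel s N len (x - c)) x :> fourier_kernel (Suc s) N len (x - c)"
proof -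
  have mode: "DERIV (\<lambda>x. w * A ^ s * cos (A * (x - c) + b)) x
      :> w * A ^ Suc s * cos (A * (x - c) + b + pi / 2)" for w A b
  proof -
    have "DERIV (\<lambda>x. w * A ^ s * cos (A * (x - c) + b)) x :> w * A ^ s * (- sin (A * (x - c) + b) * A)"
      by (auto intro!: derivative_eq_intros)
    moreover have "w * A ^ s * (- sin (A * (x - c) + b) * A) = w * A ^ Suc s * cos (A * (x - c) + b + pi / 2)"
      using minus_sin_cos_eq[of "A * (x - c) + b"] by simp
    ultimately show ?thesis by simp
  qed
  have phase: "real (Suc s) * pi / 2 = real s * pi / 2 + pi / 2" by (simp add: field_simps)
  show ?thesis unfolding fourier_kernel_def phase add.assoc[symmetric]
    by (intro DERIV_cmult DERIV_sum mode)
qed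

lemma higher_deriv_gbasis:
  "(deriv ^^ s) (gbasis N xL len k) = (\<lambda>x. fourier_kernel s N len (x - (xL + real k * len / real N)))"
proof (induction s)
  case 0 then show ?case by (simp add: gbasis_eq_fourier_kernel fun_eq_iff)
next
  case (Suc s)
  show ?case by (simp add: Suc fun_eq_iff DERIV_imp_deriv[OF DERIV_fourier_kernel])
qed

lemma Dspec_eq_fourier_kernel:
  "Dspec s N xL len j k = fourier_kernel s N len ((real j - real k) * len / real N)"
  unfolding Dspec_def higher_deriv_gbasis by (simp add: algebra_simps diff_divide_distrib)

lemma fourier_kernel_minus: "fourier_kernel s N len (- t) = (-1) ^ s * fourier_kernel s N len t"
proof -
  let ?I = "{- int (N div 2) .. int (N div 2)}"
  have a: "a_coef N (- l) = a_coef N l" for l unfolding a_coef_def by simp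
  have "(\<Sum>l \<in> ?I. (1 / a_coef N l) * (of_int l * (2 * pi / len)) ^ s *
      cos (of_int l * (2 * pi / len) * (- t) + real s * pi / 2)) =
      (\<Sum>l \<in> ?I. (1 / a_coef N (- l)) * (of_int (- l) * (2 * pi / len)) ^ s *
      cos (of_int (- l) * (2 * pi / len) * (- t) + real s * pi / 2))"
    by (rule sum.reindex_bij_witness[where i="\<lambda>l. - l" and j="\<lambda>l. - l"]) auto
  also have "\<dots> = (-1) ^ s * (\<Sum>l \<in> ?I. (1 / a_coef N l) * (of_int l * (2 * pi / len)) ^ s *
      cos (of_int l * (2 * pi / len) * t + real s * pi / 2))"
  proof -
    have "(of_int (- l) * (2 * pi / len)) ^ s = (-1) ^ s * (of_int l * (2 * pi / len)) ^ s" for l :: int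
      by (metis mult_minus_left of_int_minus power_minus)
    then show ?thesis by (simp add: a sum_distrib_left algebra_simps)
  qed
  finally show ?thesis unfolding fourier_kernel_def by (simp add: algebra_simps)
qed

lemma Dspec_transpose: "Dspec s N xL len k j = (-1) ^ s * Dspec s N xL len j k"
proof -
  have "(real k - real j) * len / real N = - ((real j - real k) * len / real N)"
    by (metis minus_diff_eq minus_divide_left mult_minus_left)
  then show ?thesis unfolding Dspec_eq_fourier_kernel by (simp add: fourier_kernel_minus)
qed

definition inner_modes :: "nat \<Rightarrow> int set" where
  "inner_modes N = {- (int (N div 2) - 1) .. int (N div 2) - 1}"

lemma sum_odd_eq_0:
  fixes f :: "int \<Rightarrow> real"
  assumes "\<And>l. f (- l) = - f l"
  shows "(\<Sum>l\<in>{-b..b}. f l) = 0"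
proof -
  have "(\<Sum>l\<in>{-b..b}. f l) = (\<Sum>l\<in>{-b..b}. f (- l))"
    by (rule sum.reindex_bij_witness[where i="\<lambda>l. - l" and j="\<lambda>l. - l"]) auto
  also have "\<dots> = - (\<Sum>l\<in>{-b..b}. f l)" by (simp add: assms sum_negf)
  finally show ?thesis by linarith
qed

lemma Dspec1_eq_mode_sum:
  assumes N: "N > 0" "even N" and len: "len \<noteq> 0"
  shows "complex_of_real (Dspec 1 N xL len j k) = (1 / of_nat N) *
    (\<Sum>l\<in>inner_modes N. \<i> * of_int l * complex_of_real (2 * pi / len) * unit_root N (l * (int j - int k)))"
proof -
  define d where "d = int j - int k"
  define th where "th l = 2 * pi * real_of_int (l * d) / real N" for l :: int
  let ?I = "{- int (N div 2) .. int (N div 2)}"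
  have "of_int l * (2 * pi / len) * ((real j - real k) * len / real N) = th l" for l :: int
    using N len by (simp add: th_def d_def field_simps)
  moreover have "cos (th l + real 1 * pi / 2) = - sin (th l)" for l
    using minus_sin_cos_eq[of "th l"] by simp
  ultimately have "Dspec 1 N xL len j k
      = (1 / real N) * (\<Sum>l\<in>?I. (1 / a_coef N l) * (of_int l * (2 * pi / len)) * (- sin (th l)))"
    unfolding Dspec_eq_fourier_kernel fourier_kernel_def by simp
  also have "(\<Sum>l\<in>?I. (1 / a_coef N l) * (of_int l * (2 * pi / len)) * (- sin (th l)))
      = (\<Sum>l\<in>inner_modes N. (of_int l * (2 * pi / len)) * (- sin (th l)))"
  proof (rule sum.mono_neutral_cong_right)
    show "inner_modes N \<subseteq> ?I" unfolding inner_modes_def by auto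
    show "\<forall>l\<in>?I - inner_modes N. 1 / a_coef N l * (of_int l * (2 * pi / len)) * - sin (th l) = 0"
    proof
      fix l assume "l \<in> ?I - inner_modes N"
      then have "l = int (N div 2) \<or> l = - int (N div 2)" unfolding inner_modes_def by auto
      \<comment> \<open>the Nyquist modes are invisible on the grid: there \<open>th l = \<plusminus>pi * d\<close>\<close>
      then have "th l = pi * real_of_int (if l = int (N div 2) then d else - d)"
        using N unfolding th_def by (auto simp: field_simps real_of_nat_div)
      then have "sin (th l) = 0" by (simp add: sin_zero_iff_int2)
      then show "1 / a_coef N l * (of_int l * (2 * pi / len)) * - sin (th l) = 0" by simp
    qed
    show "1 / a_coef N l * (of_int l * (2 * pi / len)) * - sin (th l) = of_int l * (2 * pi / len) * - sin (th l)"
      if "l \<in> inner_modes N" for l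
    proof -
      have "a_coef N l = 1" using that unfolding inner_modes_def a_coef_def by auto
      then show ?thesis by simp
    qed
  qed simp
  finally have D: "Dspec 1 N xL len j k
      = (1 / real N) * (\<Sum>l\<in>inner_modes N. (of_int l * (2 * pi / len)) * (- sin (th l)))" .
  have cos_part: "(\<Sum>l\<in>inner_modes N. (of_int l * (2 * pi / len)) * cos (th l)) = 0"
    unfolding inner_modes_def by (rule sum_odd_eq_0) (simp add: th_def)
  have "(\<Sum>l\<in>inner_modes N. \<i> * of_int l * complex_of_real (2 * pi / len) * unit_root N (l * d))
     = (\<Sum>l\<in>inner_modes N. \<i> * complex_of_real ((of_int l * (2 * pi / len)) * cos (th l))
          - complex_of_real ((of_int l * (2 * pi / len)) * sin (th l)))"
    by (intro sum.cong refl) (simp add: unit_root_eq_cos_sin th_def algebra_simps)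
  also have "\<dots> = \<i> * complex_of_real (\<Sum>l\<in>inner_modes N. (of_int l * (2 * pi / len)) * cos (th l))
      - complex_of_real (\<Sum>l\<in>inner_modes N. (of_int l * (2 * pi / len)) * sin (th l))"
    by (simp add: sum_subtractf sum_distrib_left)
  finally show ?thesis unfolding D cos_part d_def by (simp add: sum_negf)
qed

lemma Dspec1_apply_eq_mode_sum:
  assumes N: "N > 0" "even N" and len: "len \<noteq> 0"
  shows "complex_of_real (\<Sum>k<N. Dspec 1 N xL len j k * f k) =
    (\<Sum>l\<in>inner_modes N. (\<i> * of_int l * complex_of_real (2 * pi / len) * dft N f l / of_nat N)
       * unit_root N (l * int j))"
proof -
  have split: "unit_root N (l * (int j - int k)) = unit_root N (l * int j) * unit_root N (- (l * int k))"
    for l k by (simp add: algebra_simps flip: unit_root_add)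
  have "complex_of_real (\<Sum>k<N. Dspec 1 N xL len j k * f k) =
     (\<Sum>k<N. complex_of_real (Dspec 1 N xL len j k) * complex_of_real (f k))" by simp
  also have "\<dots> = (\<Sum>k<N. \<Sum>l\<in>inner_modes N. (1 / of_nat N) * (\<i> * of_int l * complex_of_real (2 * pi / len) *
        unit_root N (l * (int j - int k))) * complex_of_real (f k))"
    unfolding Dspec1_eq_mode_sum[OF N len] by (simp only: sum_distrib_left sum_distrib_right)
  also have "\<dots> = (\<Sum>l\<in>inner_modes N. \<Sum>k<N.
        (\<i> * of_int l * complex_of_real (2 * pi / len) / of_nat N * unit_root N (l * int j)) *
        (complex_of_real (f k) * unit_root N (- (l * int k))))"
    by (subst sum.swap) (simp only: split, simp add: algebra_simps)
  also have "\<dots> = (\<Sum>l\<in>inner_modes N. (\<i> * of_int l * complex_of_real (2 * pi / len) * dft N f l / of_nat N)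
       * unit_root N (l * int j))"
    unfolding dft_def by (simp add: sum_distrib_left sum_distrib_right sum_divide_distrib algebra_simps)
  finally show ?thesis .
qed

lemma inner_modes_incongruent:
  assumes "l \<in> inner_modes N" "l' \<in> inner_modes N" "int N dvd (l - l')"
  shows "l = l'"
proof -
  have "\<bar>l - l'\<bar> < int N" using assms(1,2) unfolding inner_modes_def by auto
  then show ?thesis using int_dvd_abs_less_eq_0[OF assms(3)] by simp
qed

lemma bessel_inner_modes:
  assumes N: "N > 0" "even N"
  shows "(\<Sum>l\<in>inner_modes N. (cmod (dft N y l))\<^sup>2) \<le> real N * (\<Sum>k<N. (y k)\<^sup>2)"
proof -
  let ?a = "- (int (N div 2) - 1)"
  have conj: "cmod (dft N y l) = cmod (\<Sum>k\<in>{0..<int N}. complex_of_real (y (nat k)) * unit_root N (k * l))" for l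
  proof -
    have "cmod (dft N y l) = cmod (cnj (dft N y l))" by simp
    also have "cnj (dft N y l) = (\<Sum>k<N. complex_of_real (y k) * unit_root N (int k * l))"
      unfolding dft_def by (simp add: cnj_unit_root mult.commute)
    also have "\<dots> = (\<Sum>k\<in>{0..<int N}. complex_of_real (y (nat k)) * unit_root N (k * l))"
      using sum_lessThan_as_int[of "\<lambda>k. complex_of_real (y (nat k)) * unit_root N (k * l)" N] by simp
    finally show ?thesis .
  qed
  have "inner_modes N \<subseteq> {?a..<?a + int N}"
  proof -
    from N(2) obtain m where "N = 2 * m" by (rule evenE)
    then show ?thesis unfolding inner_modes_def by auto
  qed
  then have "(\<Sum>l\<in>inner_modes N. (cmod (dft N y l))\<^sup>2) \<le> (\<Sum>l\<in>{?a..<?a + int N}. (cmod (dft N y l))\<^sup>2)"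
    by (intro sum_mono2) auto
  also have "\<dots> = real N * (\<Sum>k\<in>{0..<int N}. (cmod (complex_of_real (y (nat k))))\<^sup>2)"
    unfolding conj
  proof (rule discrete_parseval[OF N(1)])
    fix l l' assume "l \<in> {0..<int N}" "l' \<in> {0..<int N}" "int N dvd (l - l')"
    moreover from this have "\<bar>l - l'\<bar> < int N" by auto
    ultimately have "l - l' = 0" using int_dvd_abs_less_eq_0 by blast
    then show "l = l'" by simp
  qed simp
  also have "\<dots> = real N * (\<Sum>k<N. (y k)\<^sup>2)"
    using sum_lessThan_as_int[of "\<lambda>k. (y (nat k))\<^sup>2" N] by simp
  finally show ?thesis .
qed

lemma x_cos_le_sin: assumes "0 \<le> x" "x \<le> pi" shows "x * cos x \<le> sin x"
proof -
  have "(\<lambda>t. sin t - t * cos t) 0 \<le> (\<lambda>t. sin t - t * cos t) x"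
  proof (rule DERIV_nonneg_imp_nondecreasing[OF assms(1)])
    fix t assume t: "0 \<le> t" "t \<le> x"
    have "DERIV (\<lambda>t. sin t - t * cos t) t :> t * sin t"
      by (auto intro!: derivative_eq_intros simp: algebra_simps)
    moreover have "t * sin t \<ge> 0" using t assms by (simp add: sin_ge_zero)
    ultimately show "\<exists>y. DERIV (\<lambda>t. sin t - t * cos t) t :> y \<and> y \<ge> 0" by blast
  qed
  then show ?thesis by simp
qed

lemma le_two_sin: assumes "0 \<le> x" "x \<le> pi / 2" shows "x \<le> 2 * sin x"
proof -
  have s: "sin x = 2 * sin (x / 2) * cos (x / 2)"
    using sin_double[of "x / 2"] by simp
  have c0: "cos (pi / 4) \<le> cos (x / 2)"
    using assms by (intro cos_monotone_0_pi_le) auto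
  have "0 \<le> cos (pi / 4)" by (simp add: cos_45)
  then have cpos: "0 \<le> cos (x / 2)" using c0 by linarith
  have c2: "1 / 2 \<le> (cos (x / 2))\<^sup>2"
  proof -
    have "(cos (pi / 4))\<^sup>2 \<le> (cos (x / 2))\<^sup>2"
      using c0 \<open>0 \<le> cos (pi / 4)\<close> by (intro power_mono) auto
    then show ?thesis by (simp add: cos_45 power_divide)
  qed
  have "x / 2 * cos (x / 2) \<le> sin (x / 2)" using x_cos_le_sin[of "x / 2"] assms by simp
  then have "x / 2 * cos (x / 2) * cos (x / 2) \<le> sin (x / 2) * cos (x / 2)"
    using cpos mult_right_mono by blast
  then have "x * (cos (x / 2))\<^sup>2 \<le> sin x" using s by (simp add: power2_eq_square)
  moreover have "x * (1 / 2) \<le> x * (cos (x / 2))\<^sup>2" using c2 assms(1) mult_left_mono by blast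
  ultimately show ?thesis by simp
qed

lemma mode_symbol_le_difference_symbol:
  assumes N: "N > 0" "even N" and l: "l \<in> inner_modes N" and len: "len > 0"
  shows "(of_int l * (2 * pi / len))\<^sup>2 \<le> 4 * ((cmod (unit_root N l - 1))\<^sup>2 / (len / real N)\<^sup>2)"
proof -
  define x where "x = pi * \<bar>real_of_int l\<bar> / real N"
  have "\<bar>l\<bar> \<le> int N div 2" using l N unfolding inner_modes_def by auto
  then have "2 * \<bar>real_of_int l\<bar> \<le> real N" using N by (auto elim!: evenE)
  then have x: "0 \<le> x" "x \<le> pi / 2" using N unfolding x_def by (auto simp: field_simps)
  have diff: "(cmod (unit_root N l - 1))\<^sup>2 = 4 * (sin x)\<^sup>2"
  proof -
    define y where "y = pi * real_of_int l / real N"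
    have "(cmod (unit_root N l - 1))\<^sup>2 = (cos (2 * y) - 1)\<^sup>2 + (sin (2 * y))\<^sup>2"
      unfolding unit_root_def y_def cmod_def by (simp add: algebra_simps)
    also have "\<dots> = 2 - 2 * cos (2 * y)" using sin_cos_squared_add[of "2 * y"]
      by (simp add: power2_eq_square algebra_simps)
    also have "\<dots> = 4 * (sin y)\<^sup>2" by (simp add: cos_double_sin)
    also have "(sin y)\<^sup>2 = (sin x)\<^sup>2"
    proof (cases "l \<ge> 0")
      case True then show ?thesis by (simp add: x_def y_def)
    next
      case False
      then have "y = - x" by (simp add: x_def y_def)
      then show ?thesis by simp
    qed
    finally show ?thesis .
  qed
  have "x\<^sup>2 \<le> (2 * sin x)\<^sup>2" using le_two_sin[OF x] x by (intro power_mono) auto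
  then have "x\<^sup>2 \<le> 4 * (sin x)\<^sup>2" by (simp add: power_mult_distrib)
  moreover have "(of_int l * (2 * pi / len))\<^sup>2 = 4 * x\<^sup>2 * (real N / len)\<^sup>2"
  proof -
    have "4 * x\<^sup>2 * (real N / len)\<^sup>2 = 4 * (pi * \<bar>real_of_int l\<bar>)\<^sup>2 / len\<^sup>2"
      unfolding x_def power_divide using N by simp
    also have "\<dots> = (of_int l * (2 * pi / len))\<^sup>2"
      by (simp add: power_mult_distrib power_divide)
    finally show ?thesis by simp
  qed
  moreover have "4 * ((cmod (unit_root N l - 1))\<^sup>2 / (len / real N)\<^sup>2) = 16 * (sin x)\<^sup>2 * (real N / len)\<^sup>2"
    unfolding diff by (simp add: power_divide)
  ultimately show ?thesis by (simp add: mult_right_mono)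
qed

lemma sum_sq_Dspec1_apply_le:
  assumes N: "N > 0" "even N" and len: "len > 0"
  shows "(\<Sum>j<N. (\<Sum>k<N. Dspec 1 N xL len j k * f k)\<^sup>2)
    \<le> 4 * (\<Sum>j<N. ((f (succ_mod N j) - f j) / (len / real N))\<^sup>2)"
proof -
  define h where "h = len / real N"
  define c where "c l = \<i> * of_int l * complex_of_real (2 * pi / len) * dft N f l / of_nat N" for l
  define y where "y k = (f (succ_mod N k) - f k) / h" for k
  have "(\<Sum>j<N. (\<Sum>k<N. Dspec 1 N xL len j k * f k)\<^sup>2)
      = (\<Sum>j<N. (cmod (complex_of_real (\<Sum>k<N. Dspec 1 N xL len j k * f k)))\<^sup>2)"
    by (simp only: norm_of_real power2_abs)
  also have "\<dots> = (\<Sum>j<N. (cmod (\<Sum>l\<in>inner_modes N. c l * unit_root N (l * int j)))\<^sup>2)"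
    using Dspec1_apply_eq_mode_sum[OF N, of len] len by (simp add: c_def)
  also have "\<dots> = (\<Sum>j\<in>{0..<int N}. (cmod (\<Sum>l\<in>inner_modes N. c l * unit_root N (l * j)))\<^sup>2)"
    by (rule sum_lessThan_as_int)
  also have "\<dots> = real N * (\<Sum>l\<in>inner_modes N. (cmod (c l))\<^sup>2)"
    using discrete_parseval[OF N(1), of "inner_modes N" c 0] inner_modes_incongruent
    by (simp add: inner_modes_def)
  also have "\<dots> \<le> real N * (\<Sum>l\<in>inner_modes N. 4 * (cmod (dft N y l))\<^sup>2 / (real N)\<^sup>2)"
  proof (intro mult_left_mono sum_mono)
    fix l assume l: "l \<in> inner_modes N"
    have "(cmod (c l))\<^sup>2 = (of_int l * (2 * pi / len))\<^sup>2 * (cmod (dft N f l))\<^sup>2 / (real N)\<^sup>2"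
      unfolding c_def by (simp add: norm_mult norm_divide power_mult_distrib power_divide)
    also have "\<dots> \<le> 4 * ((cmod (unit_root N l - 1))\<^sup>2 / h\<^sup>2) * (cmod (dft N f l))\<^sup>2 / (real N)\<^sup>2"
      using mode_symbol_le_difference_symbol[OF N l len] unfolding h_def
      by (intro divide_right_mono mult_right_mono) auto
    also have "\<dots> = 4 * (cmod (dft N y l))\<^sup>2 / (real N)\<^sup>2"
      unfolding y_def dft_forward_difference
      by (simp add: norm_mult norm_divide power_mult_distrib power_divide)
    finally show "(cmod (c l))\<^sup>2 \<le> 4 * (cmod (dft N y l))\<^sup>2 / (real N)\<^sup>2" .
  qed simp
  also have "\<dots> = 4 / real N * (\<Sum>l\<in>inner_modes N. (cmod (dft N y l))\<^sup>2)"
    using N by (simp add: sum_distrib_left sum_divide_distrib power2_eq_square)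
  also have "\<dots> \<le> 4 / real N * (real N * (\<Sum>k<N. (y k)\<^sup>2))"
    by (intro mult_left_mono bessel_inner_modes[OF N]) auto
  also have "\<dots> = 4 * (\<Sum>j<N. ((f (succ_mod N j) - f j) / (len / real N))\<^sup>2)"
    using N by (simp add: y_def h_def)
  finally show ?thesis .
qed

section \<open>Grid functions and grid norms\<close>

lemma sum_lessThan_mult:
  fixes g :: "nat \<Rightarrow> 'a::comm_monoid_add"
  shows "(\<Sum>m<N1 * N2. g m) = (\<Sum>i2<N2. \<Sum>i1<N1. g (i1 + N1 * i2))"
proof (induction N2)
  case 0 then show ?case by simp
next
  case (Suc n)
  have "{..<N1 * Suc n} = {..<N1 * n} \<union> {N1 * n..<N1 * n + N1}" by auto
  then have "(\<Sum>m<N1 * Suc n. g m) = (\<Sum>m<N1 * n. g m) + (\<Sum>m\<in>{N1 * n..<N1 * n + N1}. g m)"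
    by (simp add: sum.union_disjoint ivl_disj_int)
  also have "(\<Sum>m\<in>{N1 * n..<N1 * n + N1}. g m) = (\<Sum>i1<N1. g (i1 + N1 * n))"
    by (rule sum.reindex_bij_witness[where i="\<lambda>i. i + N1 * n" and j="\<lambda>m. m - N1 * n"]) auto
  finally show ?case using Suc by simp
qed

lemma grid_index_mod: "(i1::nat) < N1 \<Longrightarrow> (i1 + N1 * i2) mod N1 = i1" by (cases "N1 = 0") auto

lemma grid_index_div: "(i1::nat) < N1 \<Longrightarrow> (i1 + N1 * i2) div N1 = i2" by (cases "N1 = 0") auto

lemma nat_mod_plus1: "N > 0 \<Longrightarrow> nat ((int i + 1) mod int N) = (i + 1) mod N"
  by (metis nat_int of_nat_Suc of_nat_mod Suc_eq_plus1 add.commute)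

lemma nat_mod_minus1: assumes "N > 0" "i < N" shows "nat ((int i - 1) mod int N) = (i + N - 1) mod N"
proof -
  have "int (i + N - 1) = (int i - 1) + int N" using assms by simp
  then have "int ((i + N - 1) mod N) = (int i - 1) mod int N"
    by (metis mod_add_self2 of_nat_mod)
  then show ?thesis by (metis nat_int)
qed

lemma nat_mod_same: "i < N \<Longrightarrow> nat (int i mod int N) = i"
  by (simp add: nat_mod_distrib)

lemma of_grid_at: "i1 < N1 \<Longrightarrow> of_grid N1 F (i1 + N1 * i2) = F (int i1) (int i2)"
  unfolding of_grid_def by (simp add: grid_index_mod grid_index_div)

lemma gval_at: "i1 < N1 \<Longrightarrow> i2 < N2 \<Longrightarrow> gval N1 N2 X (int i1) (int i2) = X (i1 + N1 * i2)"
  unfolding gval_def by (simp add: nat_mod_same)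

lemma gval_succ_x: "i1 < N1 \<Longrightarrow> i2 < N2 \<Longrightarrow> gval N1 N2 X (int i1 + 1) (int i2) = X (succ_mod N1 i1 + N1 * i2)"
  unfolding gval_def succ_mod_def by (simp add: nat_mod_same nat_mod_plus1)

lemma gval_succ_y: "i1 < N1 \<Longrightarrow> i2 < N2 \<Longrightarrow> gval N1 N2 X (int i1) (int i2 + 1) = X (i1 + N1 * succ_mod N2 i2)"
  unfolding gval_def succ_mod_def by (simp add: nat_mod_same nat_mod_plus1)

lemma gval_pred_x: "i1 < N1 \<Longrightarrow> i2 < N2 \<Longrightarrow> gval N1 N2 X (int i1 - 1) (int i2) = X (pred_mod N1 i1 + N1 * i2)"
  unfolding gval_def pred_mod_def by (simp add: nat_mod_same nat_mod_minus1)

lemma gval_pred_y: "i1 < N1 \<Longrightarrow> i2 < N2 \<Longrightarrow> gval N1 N2 X (int i1) (int i2 - 1) = X (i1 + N1 * pred_mod N2 i2)"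
  unfolding gval_def pred_mod_def by (simp add: nat_mod_same nat_mod_minus1)

lemma dxp_at: "i1 < N1 \<Longrightarrow> i2 < N2 \<Longrightarrow>
   dxp h1 N1 N2 X (i1 + N1 * i2) = (X (succ_mod N1 i1 + N1 * i2) - X (i1 + N1 * i2)) / h1"
  unfolding dxp_def by (simp add: of_grid_at gval_succ_x gval_at)

lemma dyp_at: "i1 < N1 \<Longrightarrow> i2 < N2 \<Longrightarrow>
   dyp h2 N1 N2 X (i1 + N1 * i2) = (X (i1 + N1 * succ_mod N2 i2) - X (i1 + N1 * i2)) / h2"
  unfolding dyp_def by (simp add: of_grid_at gval_succ_y gval_at)

lemma lap_at: "i1 < N1 \<Longrightarrow> i2 < N2 \<Longrightarrow>
   lap_h h1 h2 N1 N2 X (i1 + N1 * i2) =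
     (X (succ_mod N1 i1 + N1 * i2) - 2 * X (i1 + N1 * i2) + X (pred_mod N1 i1 + N1 * i2)) / h1\<^sup>2
   + (X (i1 + N1 * succ_mod N2 i2) - 2 * X (i1 + N1 * i2) + X (i1 + N1 * pred_mod N2 i2)) / h2\<^sup>2"
  unfolding lap_h_def by (simp add: of_grid_at gval_succ_x gval_succ_y gval_pred_x gval_pred_y gval_at)

lemma lap_h_lincomb:
  "lap_h h1 h2 N1 N2 (\<lambda>m. a * X m + b * Y m) = (\<lambda>m. a * lap_h h1 h2 N1 N2 X m + b * lap_h h1 h2 N1 N2 Y m)"
proof -
  have "gval N1 N2 (\<lambda>m. a * X m + b * Y m) = (\<lambda>j1 j2. a * gval N1 N2 X j1 j2 + b * gval N1 N2 Y j1 j2)"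
    by (simp add: fun_eq_iff gval_def)
  then show ?thesis unfolding lap_h_def of_grid_def by (simp add: fun_eq_iff divide_inverse algebra_simps)
qed

lemma norm_h_sq: assumes "0 \<le> h1 * h2"
  shows "(norm_h h1 h2 N1 N2 X)\<^sup>2 = h1 * h2 * (\<Sum>m<N1 * N2. (X m)\<^sup>2)"
proof -
  have "0 \<le> h1 * h2 * (\<Sum>m<N1 * N2. (X m)\<^sup>2)" using assms by (simp add: sum_nonneg)
  then show ?thesis unfolding norm_h_def inner_h_def by (simp add: power2_eq_square)
qed

lemma norm_h_nonneg: "0 \<le> h1 * h2 \<Longrightarrow> 0 \<le> norm_h h1 h2 N1 N2 X"
  unfolding norm_h_def inner_h_def by (simp add: sum_nonneg)

lemma norm_h_eq_L2_set:
  assumes "0 \<le> h1 * h2"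
  shows "norm_h h1 h2 N1 N2 X = sqrt (h1 * h2) * L2_set X {..<N1 * N2}"
  unfolding norm_h_def inner_h_def L2_set_def by (simp add: real_sqrt_mult power2_eq_square)

lemma L2_set_scale: "L2_set (\<lambda>x. r * f x) A = \<bar>r\<bar> * L2_set f A"
proof -
  have "L2_set (\<lambda>x. r * f x) A = L2_set (\<lambda>x. \<bar>r\<bar> * f x) A"
    unfolding L2_set_def by (simp add: power_mult_distrib)
  also have "\<dots> = \<bar>r\<bar> * L2_set f A" by (rule L2_set_right_distrib[symmetric]) simp
  finally show ?thesis .
qed

lemma norm_h_lincomb_le:
  assumes "0 \<le> h1 * h2"
  shows "norm_h h1 h2 N1 N2 (\<lambda>m. a * X m + b * Y m)
    \<le> \<bar>a\<bar> * norm_h h1 h2 N1 N2 X + \<bar>b\<bar> * norm_h h1 h2 N1 N2 Y"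
proof -
  have "L2_set (\<lambda>m. a * X m + b * Y m) {..<N1 * N2}
      \<le> L2_set (\<lambda>m. a * X m) {..<N1 * N2} + L2_set (\<lambda>m. b * Y m) {..<N1 * N2}"
    by (rule L2_set_triangle_ineq)
  then have "sqrt (h1 * h2) * L2_set (\<lambda>m. a * X m + b * Y m) {..<N1 * N2}
     \<le> sqrt (h1 * h2) * (\<bar>a\<bar> * L2_set X {..<N1 * N2} + \<bar>b\<bar> * L2_set Y {..<N1 * N2})"
    unfolding L2_set_scale using assms by (intro mult_left_mono) auto
  then show ?thesis unfolding norm_h_eq_L2_set[OF assms] by (simp add: algebra_simps)
qed

lemma norm_h_mono:
  assumes "0 \<le> h1 * h2" "0 \<le> c" "\<And>m. m < N1 * N2 \<Longrightarrow> \<bar>X m\<bar> \<le> c * \<bar>Y m\<bar>"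
  shows "norm_h h1 h2 N1 N2 X \<le> c * norm_h h1 h2 N1 N2 Y"
proof -
  have "L2_set (\<lambda>m. \<bar>X m\<bar>) {..<N1 * N2} \<le> L2_set (\<lambda>m. c * \<bar>Y m\<bar>) {..<N1 * N2}"
    by (rule L2_set_mono) (use assms in auto)
  moreover have "L2_set (\<lambda>m. \<bar>f m\<bar>) A = L2_set f A" for f :: "nat \<Rightarrow> real" and A
    unfolding L2_set_def by simp
  ultimately have "L2_set X {..<N1 * N2} \<le> c * L2_set Y {..<N1 * N2}"
    unfolding L2_set_scale using assms(2) by simp
  then show ?thesis unfolding norm_h_eq_L2_set[OF assms(1)] using assms(1)
    by (metis mult.left_commute mult_left_mono real_sqrt_ge_zero)
qed

lemma inner_abs_le_norm_h:
  assumes "0 \<le> h1 * h2"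
  shows "h1 * h2 * (\<Sum>m<N1 * N2. \<bar>f m\<bar> * \<bar>g m\<bar>) \<le> norm_h h1 h2 N1 N2 f * norm_h h1 h2 N1 N2 g"
proof -
  have "h1 * h2 * (\<Sum>m<N1 * N2. \<bar>f m\<bar> * \<bar>g m\<bar>) \<le> h1 * h2 * (L2_set f {..<N1 * N2} * L2_set g {..<N1 * N2})"
    using assms by (intro mult_left_mono L2_set_mult_ineq)
  also have "\<dots> = norm_h h1 h2 N1 N2 f * norm_h h1 h2 N1 N2 g"
  proof -
    have "sqrt (h1 * h2) * sqrt (h1 * h2) = h1 * h2" using assms by simp
    then show ?thesis unfolding norm_h_eq_L2_set[OF assms] by (metis mult.assoc mult.left_commute)
  qed
  finally show ?thesis .
qed

lemma abs_weighted_inner_le: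
  assumes hh: "0 \<le> h1 * h2" and S: "0 \<le> S" "\<And>m. m < N1 * N2 \<Longrightarrow> \<bar>w m\<bar> \<le> S"
  shows "\<bar>h1 * h2 * (\<Sum>m<N1 * N2. w m * f m * g m)\<bar>
    \<le> S * (norm_h h1 h2 N1 N2 f * norm_h h1 h2 N1 N2 g)"
proof -
  have "\<bar>\<Sum>m<N1 * N2. w m * f m * g m\<bar> \<le> (\<Sum>m<N1 * N2. \<bar>w m * f m * g m\<bar>)"
    by (rule sum_abs)
  also have "\<dots> \<le> (\<Sum>m<N1 * N2. S * (\<bar>f m\<bar> * \<bar>g m\<bar>))"
  proof (rule sum_mono)
    fix m assume "m \<in> {..<N1 * N2}"
    then have "\<bar>w m\<bar> * (\<bar>f m\<bar> * \<bar>g m\<bar>) \<le> S * (\<bar>f m\<bar> * \<bar>g m\<bar>)"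
      using S(2) by (intro mult_right_mono) auto
    then show "\<bar>w m * f m * g m\<bar> \<le> S * (\<bar>f m\<bar> * \<bar>g m\<bar>)" by (simp add: abs_mult mult.assoc)
  qed
  finally have sum_bound: "\<bar>\<Sum>m<N1 * N2. w m * f m * g m\<bar> \<le> S * (\<Sum>m<N1 * N2. \<bar>f m\<bar> * \<bar>g m\<bar>)"
    by (simp add: sum_distrib_left)
  have "\<bar>h1 * h2 * (\<Sum>m<N1 * N2. w m * f m * g m)\<bar> = h1 * h2 * \<bar>\<Sum>m<N1 * N2. w m * f m * g m\<bar>"
    by (simp only: abs_mult[of "h1 * h2"] abs_of_nonneg[OF hh])
  also have "\<dots> \<le> h1 * h2 * (S * (\<Sum>m<N1 * N2. \<bar>f m\<bar> * \<bar>g m\<bar>))"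
    by (rule mult_left_mono[OF sum_bound hh])
  also have "\<dots> = S * (h1 * h2 * (\<Sum>m<N1 * N2. \<bar>f m\<bar> * \<bar>g m\<bar>))" by (simp add: mult_ac)
  also have "\<dots> \<le> S * (norm_h h1 h2 N1 N2 f * norm_h h1 h2 N1 N2 g)"
    by (rule mult_left_mono[OF inner_abs_le_norm_h[OF hh] S(1)])
  finally show ?thesis .
qed

lemma abs_le_norm_inf_h: assumes "norm_inf_h N1 N2 X \<le> c" "m < N1 * N2" shows "\<bar>X m\<bar> \<le> c"
proof -
  have "\<bar>X m\<bar> \<le> norm_inf_h N1 N2 X" unfolding norm_inf_h_def using assms(2) by (intro Max_ge) auto
  then show ?thesis using assms(1) by simp
qed

lemma grad_norm_sq_eq: assumes "0 \<le> h1 * h2"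
  shows "grad_norm_sq h1 h2 N1 N2 E = h1 * h2 * ((\<Sum>m<N1 * N2. (dxp h1 N1 N2 E m)\<^sup>2) + (\<Sum>m<N1 * N2. (dyp h2 N1 N2 E m)\<^sup>2))"
  unfolding grad_norm_sq_def norm_h_sq[OF assms] by (simp add: distrib_left)

section \<open>Summation by parts\<close>

lemma periodic_summation_by_parts:
  fixes A B :: "nat \<Rightarrow> real"
  assumes N: "N > 0"
  shows "(\<Sum>i<N. A i * ((B (succ_mod N i) - 2 * B i + B (pred_mod N i)) / h\<^sup>2))
       = - (\<Sum>i<N. ((A (succ_mod N i) - A i) / h) * ((B (succ_mod N i) - B i) / h))"
proof -
  have s1: "(\<Sum>i<N. A i * B (pred_mod N i)) = (\<Sum>i<N. A (succ_mod N i) * B i)"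
  proof -
    have "(\<Sum>i<N. A i * B (pred_mod N i)) = (\<Sum>i<N. A (succ_mod N i) * B (pred_mod N (succ_mod N i)))"
      using sum_succ_mod[of "\<lambda>i. A i * B (pred_mod N i)" N] by simp
    also have "\<dots> = (\<Sum>i<N. A (succ_mod N i) * B i)"
      by (rule sum.cong[OF refl]) (simp add: pred_succ_mod)
    finally show ?thesis .
  qed
  have s2: "(\<Sum>i<N. A (succ_mod N i) * B (succ_mod N i)) = (\<Sum>i<N. A i * B i)"
    using sum_succ_mod[of "\<lambda>i. A i * B i" N] by simp
  have "(\<Sum>i<N. A i * ((B (succ_mod N i) - 2 * B i + B (pred_mod N i)) / h\<^sup>2))
     = ((\<Sum>i<N. A i * B (succ_mod N i)) - 2 * (\<Sum>i<N. A i * B i) + (\<Sum>i<N. A i * B (pred_mod N i))) / h\<^sup>2"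
  proof -
    have e: "A i * ((B (succ_mod N i) - 2 * B i + B (pred_mod N i)) / h\<^sup>2) = (A i * B (succ_mod N i) - 2 * (A i * B i) + A i * B (pred_mod N i)) / h\<^sup>2" for i
      by (simp add: right_diff_distrib distrib_left)
    show ?thesis unfolding e
      by (simp only: sum_divide_distrib[symmetric] sum.distrib sum_subtractf sum_distrib_left)
  qed
  also have "\<dots> = - ((\<Sum>i<N. A (succ_mod N i) * B (succ_mod N i)) - (\<Sum>i<N. A (succ_mod N i) * B i)
        - (\<Sum>i<N. A i * B (succ_mod N i)) + (\<Sum>i<N. A i * B i)) / h\<^sup>2"
    unfolding s1 s2 by (simp add: algebra_simps)
  also have "\<dots> = - (\<Sum>i<N. ((A (succ_mod N i) - A i) / h) * ((B (succ_mod N i) - B i) / h))"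
  proof -
    have e: "((A (succ_mod N i) - A i) / h) * ((B (succ_mod N i) - B i) / h) =
       (A (succ_mod N i) * B (succ_mod N i) - A (succ_mod N i) * B i - A i * B (succ_mod N i) + A i * B i) / h\<^sup>2" for i
      by (simp add: power2_eq_square algebra_simps)
    show ?thesis unfolding e
      by (simp only: sum_divide_distrib[symmetric] sum.distrib sum_subtractf)
  qed
  finally show ?thesis .
qed

lemma sum_mult_lap_h_split:
  assumes N: "N1 > 0" "N2 > 0"
  shows "(\<Sum>m<N1 * N2. A m * lap_h h1 h2 N1 N2 E m) =
    (\<Sum>i2<N2. \<Sum>i1<N1. A (i1 + N1 * i2) *
        ((E (succ_mod N1 i1 + N1 * i2) - 2 * E (i1 + N1 * i2) + E (pred_mod N1 i1 + N1 * i2)) / h1\<^sup>2))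
  + (\<Sum>i1<N1. \<Sum>i2<N2. A (i1 + N1 * i2) *
        ((E (i1 + N1 * succ_mod N2 i2) - 2 * E (i1 + N1 * i2) + E (i1 + N1 * pred_mod N2 i2)) / h2\<^sup>2))"
proof -
  have "(\<Sum>m<N1 * N2. A m * lap_h h1 h2 N1 N2 E m) =
    (\<Sum>i2<N2. \<Sum>i1<N1. A (i1 + N1 * i2) *
        ((E (succ_mod N1 i1 + N1 * i2) - 2 * E (i1 + N1 * i2) + E (pred_mod N1 i1 + N1 * i2)) / h1\<^sup>2)
      + A (i1 + N1 * i2) *
        ((E (i1 + N1 * succ_mod N2 i2) - 2 * E (i1 + N1 * i2) + E (i1 + N1 * pred_mod N2 i2)) / h2\<^sup>2))"
    unfolding sum_lessThan_mult by (intro sum.cong refl) (simp add: lap_at distrib_left)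
  also have "\<dots> = (\<Sum>i2<N2. \<Sum>i1<N1. A (i1 + N1 * i2) *
        ((E (succ_mod N1 i1 + N1 * i2) - 2 * E (i1 + N1 * i2) + E (pred_mod N1 i1 + N1 * i2)) / h1\<^sup>2))
    + (\<Sum>i2<N2. \<Sum>i1<N1. A (i1 + N1 * i2) *
        ((E (i1 + N1 * succ_mod N2 i2) - 2 * E (i1 + N1 * i2) + E (i1 + N1 * pred_mod N2 i2)) / h2\<^sup>2))"
    by (simp only: sum.distrib)
  also have "(\<Sum>i2<N2. \<Sum>i1<N1. A (i1 + N1 * i2) *
        ((E (i1 + N1 * succ_mod N2 i2) - 2 * E (i1 + N1 * i2) + E (i1 + N1 * pred_mod N2 i2)) / h2\<^sup>2))
     = (\<Sum>i1<N1. \<Sum>i2<N2. A (i1 + N1 * i2) *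
        ((E (i1 + N1 * succ_mod N2 i2) - 2 * E (i1 + N1 * i2) + E (i1 + N1 * pred_mod N2 i2)) / h2\<^sup>2))"
    by (rule sum.swap)
  finally show ?thesis .
qed

lemma sum_mult_lap_h_self:
  assumes N: "N1 > 0" "N2 > 0"
  shows "(\<Sum>m<N1 * N2. E m * lap_h h1 h2 N1 N2 E m) =
    - ((\<Sum>m<N1 * N2. (dxp h1 N1 N2 E m)\<^sup>2) + (\<Sum>m<N1 * N2. (dyp h2 N1 N2 E m)\<^sup>2))"
proof -
  have x: "(\<Sum>i2<N2. \<Sum>i1<N1. E (i1 + N1 * i2) *
        ((E (succ_mod N1 i1 + N1 * i2) - 2 * E (i1 + N1 * i2) + E (pred_mod N1 i1 + N1 * i2)) / h1\<^sup>2))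
      = - (\<Sum>m<N1 * N2. (dxp h1 N1 N2 E m)\<^sup>2)"
  proof -
    have "(\<Sum>i2<N2. \<Sum>i1<N1. E (i1 + N1 * i2) *
        ((E (succ_mod N1 i1 + N1 * i2) - 2 * E (i1 + N1 * i2) + E (pred_mod N1 i1 + N1 * i2)) / h1\<^sup>2))
      = (\<Sum>i2<N2. - (\<Sum>i1<N1. ((E (succ_mod N1 i1 + N1 * i2) - E (i1 + N1 * i2)) / h1) *
            ((E (succ_mod N1 i1 + N1 * i2) - E (i1 + N1 * i2)) / h1)))"
    proof (rule sum.cong[OF refl])
      fix i2 show "(\<Sum>i1<N1. E (i1 + N1 * i2) *
        ((E (succ_mod N1 i1 + N1 * i2) - 2 * E (i1 + N1 * i2) + E (pred_mod N1 i1 + N1 * i2)) / h1\<^sup>2))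
      = - (\<Sum>i1<N1. ((E (succ_mod N1 i1 + N1 * i2) - E (i1 + N1 * i2)) / h1) *
            ((E (succ_mod N1 i1 + N1 * i2) - E (i1 + N1 * i2)) / h1))"
        using periodic_summation_by_parts[OF N(1), of "\<lambda>i. E (i + N1 * i2)" "\<lambda>i. E (i + N1 * i2)" h1] by simp
    qed
    also have "\<dots> = - (\<Sum>m<N1 * N2. (dxp h1 N1 N2 E m)\<^sup>2)"
      unfolding sum_lessThan_mult sum_negf[symmetric] by (intro sum.cong refl) (simp add: dxp_at power2_eq_square)
    finally show ?thesis .
  qed
  have y: "(\<Sum>i1<N1. \<Sum>i2<N2. E (i1 + N1 * i2) *
        ((E (i1 + N1 * succ_mod N2 i2) - 2 * E (i1 + N1 * i2) + E (i1 + N1 * pred_mod N2 i2)) / h2\<^sup>2))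
      = - (\<Sum>m<N1 * N2. (dyp h2 N1 N2 E m)\<^sup>2)"
  proof -
    have "(\<Sum>i1<N1. \<Sum>i2<N2. E (i1 + N1 * i2) *
        ((E (i1 + N1 * succ_mod N2 i2) - 2 * E (i1 + N1 * i2) + E (i1 + N1 * pred_mod N2 i2)) / h2\<^sup>2))
      = (\<Sum>i1<N1. - (\<Sum>i2<N2. ((E (i1 + N1 * succ_mod N2 i2) - E (i1 + N1 * i2)) / h2) *
            ((E (i1 + N1 * succ_mod N2 i2) - E (i1 + N1 * i2)) / h2)))"
    proof (rule sum.cong[OF refl])
      fix i1 show "(\<Sum>i2<N2. E (i1 + N1 * i2) *
        ((E (i1 + N1 * succ_mod N2 i2) - 2 * E (i1 + N1 * i2) + E (i1 + N1 * pred_mod N2 i2)) / h2\<^sup>2))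
      = - (\<Sum>i2<N2. ((E (i1 + N1 * succ_mod N2 i2) - E (i1 + N1 * i2)) / h2) *
            ((E (i1 + N1 * succ_mod N2 i2) - E (i1 + N1 * i2)) / h2))"
        using periodic_summation_by_parts[OF N(2), of "\<lambda>i. E (i1 + N1 * i)" "\<lambda>i. E (i1 + N1 * i)" h2] by simp
    qed
    also have "\<dots> = - (\<Sum>i2<N2. \<Sum>i1<N1. (dyp h2 N1 N2 E (i1 + N1 * i2))\<^sup>2)"
      unfolding sum_negf[symmetric] by (subst sum.swap) (intro sum.cong refl, simp add: dyp_at power2_eq_square)
    also have "\<dots> = - (\<Sum>m<N1 * N2. (dyp h2 N1 N2 E m)\<^sup>2)" unfolding sum_lessThan_mult ..
    finally show ?thesis .
  qed
  show ?thesis unfolding sum_mult_lap_h_split[OF N] x y by simp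
qed

lemma grad_norm_sq_le_norm_lap:
  assumes N: "N1 > 0" "N2 > 0" and h: "0 < h1" "0 < h2"
  shows "grad_norm_sq h1 h2 N1 N2 E \<le> norm_h h1 h2 N1 N2 E * norm_h h1 h2 N1 N2 (lap_h h1 h2 N1 N2 E)"
proof -
  let ?n = "N1 * N2"
  have hh: "0 \<le> h1 * h2" using h by simp
  have "grad_norm_sq h1 h2 N1 N2 E = h1 * h2 * (- (\<Sum>m<?n. E m * lap_h h1 h2 N1 N2 E m))"
    unfolding grad_norm_sq_eq[OF hh] sum_mult_lap_h_self[OF N] by simp
  also have "\<dots> \<le> h1 * h2 * (\<Sum>m<?n. \<bar>E m\<bar> * \<bar>lap_h h1 h2 N1 N2 E m\<bar>)"
  proof -
    have "- (\<Sum>m<?n. E m * lap_h h1 h2 N1 N2 E m) \<le> (\<Sum>m<?n. \<bar>E m\<bar> * \<bar>lap_h h1 h2 N1 N2 E m\<bar>)"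
      unfolding sum_negf[symmetric] by (intro sum_mono) (simp add: abs_mult[symmetric])
    then show ?thesis by (rule mult_left_mono[OF _ hh])
  qed
  also have "\<dots> \<le> norm_h h1 h2 N1 N2 E * norm_h h1 h2 N1 N2 (lap_h h1 h2 N1 N2 E)"
    by (rule inner_abs_le_norm_h[OF hh])
  finally show ?thesis .
qed

lemma sum_sq_mixed_difference_le:
  assumes N: "N1 > 0" "N2 > 0" and h: "h1 \<noteq> 0" "h2 \<noteq> 0"
  shows "2 * (\<Sum>m<N1 * N2. (dyp h2 N1 N2 (dxp h1 N1 N2 E) m)\<^sup>2) \<le> (\<Sum>m<N1 * N2. (lap_h h1 h2 N1 N2 E m)\<^sup>2)"
proof -
  define W where "W i1 i2 = (E (succ_mod N1 i1 + N1 * i2) - E (i1 + N1 * i2)) / h1" for i1 i2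
  define Lx where "Lx i1 i2 = (E (succ_mod N1 i1 + N1 * i2) - 2 * E (i1 + N1 * i2) + E (pred_mod N1 i1 + N1 * i2)) / h1\<^sup>2" for i1 i2
  define Ly where "Ly i1 i2 = (E (i1 + N1 * succ_mod N2 i2) - 2 * E (i1 + N1 * i2) + E (i1 + N1 * pred_mod N2 i2)) / h2\<^sup>2" for i1 i2
  have mixed: "dyp h2 N1 N2 (dxp h1 N1 N2 E) (i1 + N1 * i2) = (W i1 (succ_mod N2 i2) - W i1 i2) / h2"
    if "i1 < N1" "i2 < N2" for i1 i2
    using that succ_mod_less by (simp add: dyp_at dxp_at W_def)
  have dLy: "(Ly (succ_mod N1 i1) i2 - Ly i1 i2) / h1 = (W i1 (succ_mod N2 i2) - 2 * W i1 i2 + W i1 (pred_mod N2 i2)) / h2\<^sup>2" for i1 i2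
    unfolding Ly_def W_def using h by (simp add: field_simps)
  have "(\<Sum>i2<N2. \<Sum>i1<N1. Ly i1 i2 * Lx i1 i2)
      = (\<Sum>i2<N2. - (\<Sum>i1<N1. ((Ly (succ_mod N1 i1) i2 - Ly i1 i2) / h1) * W i1 i2))"
  proof (rule sum.cong[OF refl])
    fix i2 show "(\<Sum>i1<N1. Ly i1 i2 * Lx i1 i2) = - (\<Sum>i1<N1. ((Ly (succ_mod N1 i1) i2 - Ly i1 i2) / h1) * W i1 i2)"
      using periodic_summation_by_parts[OF N(1), of "\<lambda>i. Ly i i2" "\<lambda>i. E (i + N1 * i2)" h1] unfolding Lx_def W_def by simp
  qed
  also have "\<dots> = (\<Sum>i1<N1. - (\<Sum>i2<N2. W i1 i2 * ((W i1 (succ_mod N2 i2) - 2 * W i1 i2 + W i1 (pred_mod N2 i2)) / h2\<^sup>2)))"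
    unfolding dLy sum_negf[symmetric] by (subst sum.swap) (simp add: mult.commute)
  also have "\<dots> = (\<Sum>i1<N1. \<Sum>i2<N2. ((W i1 (succ_mod N2 i2) - W i1 i2) / h2) * ((W i1 (succ_mod N2 i2) - W i1 i2) / h2))"
  proof (rule sum.cong[OF refl])
    fix i1 show "- (\<Sum>i2<N2. W i1 i2 * ((W i1 (succ_mod N2 i2) - 2 * W i1 i2 + W i1 (pred_mod N2 i2)) / h2\<^sup>2)) =
       (\<Sum>i2<N2. ((W i1 (succ_mod N2 i2) - W i1 i2) / h2) * ((W i1 (succ_mod N2 i2) - W i1 i2) / h2))"
      using periodic_summation_by_parts[OF N(2), of "\<lambda>i. W i1 i" "\<lambda>i. W i1 i" h2] by simp
  qed
  also have "\<dots> = (\<Sum>i2<N2. \<Sum>i1<N1. (dyp h2 N1 N2 (dxp h1 N1 N2 E) (i1 + N1 * i2))\<^sup>2)"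
    by (subst sum.swap) (intro sum.cong refl, simp add: mixed power2_eq_square)
  also have "\<dots> = (\<Sum>m<N1 * N2. (dyp h2 N1 N2 (dxp h1 N1 N2 E) m)\<^sup>2)" unfolding sum_lessThan_mult ..
  finally have key: "(\<Sum>i2<N2. \<Sum>i1<N1. Ly i1 i2 * Lx i1 i2) = (\<Sum>m<N1 * N2. (dyp h2 N1 N2 (dxp h1 N1 N2 E) m)\<^sup>2)" .
  have "(\<Sum>m<N1 * N2. (lap_h h1 h2 N1 N2 E m)\<^sup>2) = (\<Sum>i2<N2. \<Sum>i1<N1. (Lx i1 i2 + Ly i1 i2)\<^sup>2)"
    unfolding sum_lessThan_mult by (intro sum.cong refl) (simp add: lap_at Lx_def Ly_def)
  also have "\<dots> \<ge> (\<Sum>i2<N2. \<Sum>i1<N1. 2 * (Ly i1 i2 * Lx i1 i2))"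
  proof (intro sum_mono)
    fix i1 i2
    have "0 \<le> (Lx i1 i2)\<^sup>2 + (Ly i1 i2)\<^sup>2" by simp
    moreover have "(Lx i1 i2 + Ly i1 i2)\<^sup>2 = (Lx i1 i2)\<^sup>2 + (Ly i1 i2)\<^sup>2 + 2 * (Ly i1 i2 * Lx i1 i2)"
      by (simp add: power2_eq_square algebra_simps)
    ultimately show "2 * (Ly i1 i2 * Lx i1 i2) \<le> (Lx i1 i2 + Ly i1 i2)\<^sup>2" by linarith
  qed
  finally show ?thesis unfolding sum_distrib_left[symmetric] key .
qed

section \<open>The spectral first derivative on the grid\<close>

lemma mat_vec_kron_idm_left:
  assumes "i1 < N1" "i2 < N2"
  shows "mat_vec (N1 * N2) (kron N1 idm D) X (i1 + N1 * i2) = (\<Sum>k1<N1. D i1 k1 * X (k1 + N1 * i2))"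
proof -
  have "mat_vec (N1 * N2) (kron N1 idm D) X (i1 + N1 * i2)
     = (\<Sum>k2<N2. \<Sum>k1<N1. idm i2 k2 * D i1 k1 * X (k1 + N1 * k2))"
    unfolding mat_vec_def kron_def using assms by (simp add: sum_lessThan_mult)
  also have "\<dots> = (\<Sum>k2<N2. if k2 = i2 then (\<Sum>k1<N1. D i1 k1 * X (k1 + N1 * i2)) else 0)"
    by (rule sum.cong[OF refl]) (simp add: idm_def)
  also have "\<dots> = (\<Sum>k1<N1. D i1 k1 * X (k1 + N1 * i2))" using assms by (simp add: sum.delta)
  finally show ?thesis .
qed

lemma mat_vec_kron_idm_right:
  assumes "i1 < N1" "i2 < N2"
  shows "mat_vec (N1 * N2) (kron N1 D idm) X (i1 + N1 * i2) = (\<Sum>k2<N2. D i2 k2 * X (i1 + N1 * k2))"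
proof -
  have "mat_vec (N1 * N2) (kron N1 D idm) X (i1 + N1 * i2)
     = (\<Sum>k2<N2. \<Sum>k1<N1. D i2 k2 * idm i1 k1 * X (k1 + N1 * k2))"
    unfolding mat_vec_def kron_def using assms by (simp add: sum_lessThan_mult)
  also have "\<dots> = (\<Sum>k2<N2. D i2 k2 * X (i1 + N1 * k2))"
  proof (rule sum.cong[OF refl])
    fix k2
    have "(\<Sum>k1<N1. D i2 k2 * idm i1 k1 * X (k1 + N1 * k2)) =
       (\<Sum>k1<N1. if k1 = i1 then D i2 k2 * X (i1 + N1 * k2) else 0)"
      by (rule sum.cong[OF refl]) (auto simp: idm_def)
    then show "(\<Sum>k1<N1. D i2 k2 * idm i1 k1 * X (k1 + N1 * k2)) = D i2 k2 * X (i1 + N1 * k2)"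
      using assms by (simp add: sum.delta')
  qed
  finally show ?thesis .
qed

lemma square_add_le: "(a + b)\<^sup>2 \<le> 2 * a\<^sup>2 + 2 * (b::real)\<^sup>2"
proof -
  have "0 \<le> (a - b)\<^sup>2" by simp
  moreover have "(a - b)\<^sup>2 = a\<^sup>2 - 2 * a * b + b\<^sup>2" "(a + b)\<^sup>2 = a\<^sup>2 + 2 * a * b + b\<^sup>2"
    by (simp_all add: power2_eq_square algebra_simps)
  ultimately show ?thesis by linarith
qed

lemma sum_sq_Lmat_apply_le:
  assumes N: "N1 > 0" "N2 > 0" "even N1" "even N2" and l: "xL < xR" "yL < yR"
  shows "(\<Sum>m<N1 * N2. (mat_vec (N1 * N2) (Lmat xL xR yL yR N1 N2) X m)\<^sup>2)
    \<le> 8 * ((\<Sum>m<N1 * N2. (dxp ((xR - xL) / real N1) N1 N2 X m)\<^sup>2)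
           + (\<Sum>m<N1 * N2. (dyp ((yR - yL) / real N2) N1 N2 X m)\<^sup>2))"
proof -
  let ?n = "N1 * N2"
  let ?Dx = "Dspec 1 N1 xL (xR - xL)" and ?Dy = "Dspec 1 N2 yL (yR - yL)"
  define Ax where "Ax m = mat_vec ?n (kron N1 idm ?Dx) X m" for m
  define Ay where "Ay m = mat_vec ?n (kron N1 ?Dy idm) X m" for m
  have LA: "mat_vec ?n (Lmat xL xR yL yR N1 N2) X m = Ax m + Ay m" for m
    unfolding Ax_def Ay_def mat_vec_def Lmat_def by (simp add: sum.distrib distrib_right)
  have x: "(\<Sum>m<?n. (Ax m)\<^sup>2) \<le> 4 * (\<Sum>m<?n. (dxp ((xR - xL) / real N1) N1 N2 X m)\<^sup>2)"
  proof -
    have "(\<Sum>m<?n. (Ax m)\<^sup>2) = (\<Sum>i2<N2. \<Sum>i1<N1. (\<Sum>k1<N1. ?Dx i1 k1 * X (k1 + N1 * i2))\<^sup>2)"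
      unfolding sum_lessThan_mult Ax_def by (intro sum.cong refl) (simp add: mat_vec_kron_idm_left)
    also have "\<dots> \<le> (\<Sum>i2<N2. 4 * (\<Sum>i1<N1. ((X (succ_mod N1 i1 + N1 * i2) - X (i1 + N1 * i2)) / ((xR - xL) / real N1))\<^sup>2))"
      by (intro sum_mono sum_sq_Dspec1_apply_le) (use N l in auto)
    also have "\<dots> = 4 * (\<Sum>m<?n. (dxp ((xR - xL) / real N1) N1 N2 X m)\<^sup>2)"
      unfolding sum_lessThan_mult sum_distrib_left by (intro sum.cong refl) (simp add: dxp_at succ_mod_def)
    finally show ?thesis .
  qed
  have y: "(\<Sum>m<?n. (Ay m)\<^sup>2) \<le> 4 * (\<Sum>m<?n. (dyp ((yR - yL) / real N2) N1 N2 X m)\<^sup>2)"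
  proof -
    have "(\<Sum>m<?n. (Ay m)\<^sup>2) = (\<Sum>i2<N2. \<Sum>i1<N1. (\<Sum>k2<N2. ?Dy i2 k2 * X (i1 + N1 * k2))\<^sup>2)"
      unfolding sum_lessThan_mult Ay_def by (intro sum.cong refl) (simp add: mat_vec_kron_idm_right)
    also have "\<dots> = (\<Sum>i1<N1. \<Sum>i2<N2. (\<Sum>k2<N2. ?Dy i2 k2 * X (i1 + N1 * k2))\<^sup>2)"
      by (rule sum.swap)
    also have "\<dots> \<le> (\<Sum>i1<N1. 4 * (\<Sum>i2<N2. ((X (i1 + N1 * (succ_mod N2 i2)) - X (i1 + N1 * i2)) / ((yR - yL) / real N2))\<^sup>2))"
      by (intro sum_mono sum_sq_Dspec1_apply_le) (use N l in auto)
    also have "\<dots> = 4 * (\<Sum>i2<N2. \<Sum>i1<N1. (dyp ((yR - yL) / real N2) N1 N2 X (i1 + N1 * i2))\<^sup>2)"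
      unfolding sum_distrib_left by (subst sum.swap) (intro sum.cong refl, simp add: dyp_at succ_mod_def)
    also have "\<dots> = 4 * (\<Sum>m<?n. (dyp ((yR - yL) / real N2) N1 N2 X m)\<^sup>2)"
      unfolding sum_lessThan_mult ..
    finally show ?thesis .
  qed
  have "(\<Sum>m<?n. (mat_vec ?n (Lmat xL xR yL yR N1 N2) X m)\<^sup>2) \<le> (\<Sum>m<?n. 2 * (Ax m)\<^sup>2 + 2 * (Ay m)\<^sup>2)"
    unfolding LA by (intro sum_mono square_add_le)
  also have "\<dots> = 2 * (\<Sum>m<?n. (Ax m)\<^sup>2) + 2 * (\<Sum>m<?n. (Ay m)\<^sup>2)"
    by (simp add: sum.distrib sum_distrib_left)
  finally have "(\<Sum>m<?n. (mat_vec ?n (Lmat xL xR yL yR N1 N2) X m)\<^sup>2) \<le> 2 * (\<Sum>m<?n. (Ax m)\<^sup>2) + 2 * (\<Sum>m<?n. (Ay m)\<^sup>2)" .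
  then show ?thesis using x y unfolding distrib_left by linarith
qed

lemma norm_h_Lmat_apply_sq_le:
  assumes N: "N1 > 0" "N2 > 0" "even N1" "even N2" and l: "xL < xR" "yL < yR"
    and h: "h1 = (xR - xL) / real N1" "h2 = (yR - yL) / real N2"
  shows "(norm_h h1 h2 N1 N2 (mat_vec (N1 * N2) (Lmat xL xR yL yR N1 N2) E))\<^sup>2 \<le> 8 * grad_norm_sq h1 h2 N1 N2 E"
proof -
  have hh: "0 \<le> h1 * h2" unfolding h using N l by simp
  have "(norm_h h1 h2 N1 N2 (mat_vec (N1 * N2) (Lmat xL xR yL yR N1 N2) E))\<^sup>2
     = h1 * h2 * (\<Sum>m<N1 * N2. (mat_vec (N1 * N2) (Lmat xL xR yL yR N1 N2) E m)\<^sup>2)"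
    by (rule norm_h_sq[OF hh])
  also have "\<dots> \<le> h1 * h2 * (8 * ((\<Sum>m<N1 * N2. (dxp h1 N1 N2 E m)\<^sup>2) + (\<Sum>m<N1 * N2. (dyp h2 N1 N2 E m)\<^sup>2)))"
    using sum_sq_Lmat_apply_le[OF N l, of E] unfolding h(1)[symmetric] h(2)[symmetric]
    by (rule mult_left_mono[OF _ hh])
  also have "\<dots> = 8 * grad_norm_sq h1 h2 N1 N2 E" unfolding grad_norm_sq_eq[OF hh] by simp
  finally show ?thesis .
qed

lemma norm_h_Lmat_apply_le:
  assumes N: "N1 > 0" "N2 > 0" "even N1" "even N2" and l: "xL < xR" "yL < yR"
    and h: "h1 = (xR - xL) / real N1" "h2 = (yR - yL) / real N2"
  shows "norm_h h1 h2 N1 N2 (mat_vec (N1 * N2) (Lmat xL xR yL yR N1 N2) E)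
     \<le> 2 * (norm_h h1 h2 N1 N2 E + norm_h h1 h2 N1 N2 (lap_h h1 h2 N1 N2 E))"
proof -
  have hp: "h1 > 0" "h2 > 0" unfolding h using N l by auto
  then have hh: "0 \<le> h1 * h2" by simp
  let ?e = "norm_h h1 h2 N1 N2 E" and ?g = "norm_h h1 h2 N1 N2 (lap_h h1 h2 N1 N2 E)"
  let ?LE = "norm_h h1 h2 N1 N2 (mat_vec (N1 * N2) (Lmat xL xR yL yR N1 N2) E)"
  have "?LE\<^sup>2 \<le> 8 * grad_norm_sq h1 h2 N1 N2 E"
    by (rule norm_h_Lmat_apply_sq_le[OF N l h])
  also have "\<dots> \<le> 8 * (?e * ?g)" using grad_norm_sq_le_norm_lap[OF N(1,2) hp, of E] by simp
  also have "\<dots> \<le> (2 * (?e + ?g))\<^sup>2"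
  proof -
    have "0 \<le> (?e - ?g)\<^sup>2" by simp
    then show ?thesis by (simp add: power2_eq_square algebra_simps)
  qed
  finally have "?LE\<^sup>2 \<le> (2 * (?e + ?g))\<^sup>2" .
  moreover have "0 \<le> 2 * (?e + ?g)" using norm_h_nonneg[OF hh] by simp
  ultimately show ?thesis by (rule power2_le_imp_le)
qed

lemma norm_h_Lmat_apply_le_grad_bound:
  assumes N: "N1 > 0" "N2 > 0" "even N1" "even N2" and l: "xL < xR" "yL < yR"
    and h: "h1 = (xR - xL) / real N1" "h2 = (yR - yL) / real N2"
    and grad: "sqrt (grad_norm_sq h1 h2 N1 N2 V) \<le> C0"
  shows "norm_h h1 h2 N1 N2 (mat_vec (N1 * N2) (Lmat xL xR yL yR N1 N2) V) \<le> 3 * \<bar>C0\<bar>"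
proof -
  have g0: "0 \<le> grad_norm_sq h1 h2 N1 N2 V" unfolding grad_norm_sq_def by simp
  have "grad_norm_sq h1 h2 N1 N2 V = (sqrt (grad_norm_sq h1 h2 N1 N2 V))\<^sup>2" using g0 by simp
  also have "\<dots> \<le> \<bar>C0\<bar>\<^sup>2"
    using grad g0 by (intro power_mono) auto
  finally have grad_bound: "grad_norm_sq h1 h2 N1 N2 V \<le> \<bar>C0\<bar>\<^sup>2" .
  have "(norm_h h1 h2 N1 N2 (mat_vec (N1 * N2) (Lmat xL xR yL yR N1 N2) V))\<^sup>2 \<le> 8 * grad_norm_sq h1 h2 N1 N2 V"
    by (rule norm_h_Lmat_apply_sq_le[OF N l h])
  also have "\<dots> \<le> 9 * \<bar>C0\<bar>\<^sup>2" using grad_bound zero_le_power2[of "\<bar>C0\<bar>"] by linarith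
  also have "\<dots> = (3 * \<bar>C0\<bar>)\<^sup>2" by (simp add: power_mult_distrib)
  finally show ?thesis by (rule power2_le_imp_le) simp
qed

section \<open>A discrete Sobolev inequality\<close>

lemma abs_diff_le_variation:
  fixes g :: "nat \<Rightarrow> real"
  assumes N: "N > 0" and j: "j < N" and k: "k < N"
  shows "\<bar>g j - g k\<bar> \<le> (\<Sum>i<N. \<bar>g (succ_mod N i) - g i\<bar>)"
proof -
  define g' where "g' i = g (i mod N)" for i
  have gp: "g' (Suc i) = g (succ_mod N i)" for i unfolding g'_def succ_mod_def by simp
  have gi: "i < N \<Longrightarrow> g' i = g i" for i unfolding g'_def by simp
  have tv: "(\<Sum>i\<in>I. \<bar>g' (Suc i) - g' i\<bar>) \<le> (\<Sum>i<N. \<bar>g (succ_mod N i) - g i\<bar>)" if "I \<subseteq> {..<N}" for I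
  proof -
    have "(\<Sum>i\<in>I. \<bar>g' (Suc i) - g' i\<bar>) = (\<Sum>i\<in>I. \<bar>g (succ_mod N i) - g i\<bar>)"
      by (rule sum.cong[OF refl]) (use that in \<open>auto simp: gp gi\<close>)
    also have "\<dots> \<le> (\<Sum>i<N. \<bar>g (succ_mod N i) - g i\<bar>)"
      by (rule sum_mono2) (use that in auto)
    finally show ?thesis .
  qed
  show ?thesis
  proof (cases "k \<le> j")
    case True
    have "\<bar>g j - g k\<bar> = \<bar>\<Sum>i\<in>{k..<j}. g' (Suc i) - g' i\<bar>"
      using sum_Suc_diff'[OF True, where f = g'] gi j k by simp
    also have "\<dots> \<le> (\<Sum>i\<in>{k..<j}. \<bar>g' (Suc i) - g' i\<bar>)" by (rule sum_abs)
    also have "\<dots> \<le> (\<Sum>i<N. \<bar>g (succ_mod N i) - g i\<bar>)" by (rule tv) (use j in auto)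
    finally show ?thesis .
  next
    case False
    have a: "g j - g 0 = (\<Sum>i\<in>{0..<j}. g' (Suc i) - g' i)"
      using sum_Suc_diff'[where f = g' and m = 0 and n = j] gi j N by simp
    have b: "g 0 - g k = (\<Sum>i\<in>{k..<N}. g' (Suc i) - g' i)"
    proof -
      have "g' N - g' k = (\<Sum>i\<in>{k..<N}. g' (Suc i) - g' i)" using sum_Suc_diff'[where f = g' and m = k and n = N] k by simp
      moreover have "g' N = g 0" unfolding g'_def by simp
      ultimately show ?thesis using gi k by simp
    qed
    have "\<bar>g j - g k\<bar> = \<bar>(\<Sum>i\<in>{0..<j}. g' (Suc i) - g' i) + (\<Sum>i\<in>{k..<N}. g' (Suc i) - g' i)\<bar>"
      using a b by simp
    also have "\<dots> = \<bar>\<Sum>i\<in>{0..<j} \<union> {k..<N}. g' (Suc i) - g' i\<bar>"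
      using False by (subst sum.union_disjoint) auto
    also have "\<dots> \<le> (\<Sum>i\<in>{0..<j} \<union> {k..<N}. \<bar>g' (Suc i) - g' i\<bar>)" by (rule sum_abs)
    also have "\<dots> \<le> (\<Sum>i<N. \<bar>g (succ_mod N i) - g i\<bar>)" by (rule tv) (use j in auto)
    finally show ?thesis .
  qed
qed

lemma abs_le_mean_plus_variation:
  fixes g :: "nat \<Rightarrow> real"
  assumes N: "N > 0" and j: "j < N"
  shows "\<bar>g j\<bar> \<le> (\<Sum>k<N. \<bar>g k\<bar>) / real N + (\<Sum>i<N. \<bar>g (succ_mod N i) - g i\<bar>)"
proof -
  let ?T = "(\<Sum>i<N. \<bar>g (succ_mod N i) - g i\<bar>)"
  have "\<bar>g j\<bar> \<le> \<bar>g k\<bar> + ?T" if "k < N" for k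
    using abs_diff_le_variation[OF N j that, of g] by linarith
  then have "(\<Sum>k<N. \<bar>g j\<bar>) \<le> (\<Sum>k<N. \<bar>g k\<bar> + ?T)" by (intro sum_mono) auto
  then have "real N * \<bar>g j\<bar> \<le> (\<Sum>k<N. \<bar>g k\<bar>) + real N * ?T" by (simp add: sum.distrib)
  then show ?thesis using N by (simp add: field_simps)
qed

lemma abs_sum_abs_diff_le: fixes a b :: "'i \<Rightarrow> real" shows "\<bar>(\<Sum>k\<in>A. \<bar>a k\<bar>) - (\<Sum>k\<in>A. \<bar>b k\<bar>)\<bar> \<le> (\<Sum>k\<in>A. \<bar>a k - b k\<bar>)"
proof -
  have "\<bar>(\<Sum>k\<in>A. \<bar>a k\<bar>) - (\<Sum>k\<in>A. \<bar>b k\<bar>)\<bar> = \<bar>\<Sum>k\<in>A. \<bar>a k\<bar> - \<bar>b k\<bar>\<bar>" by (simp only: sum_subtractf)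
  also have "\<dots> \<le> (\<Sum>k\<in>A. \<bar>\<bar>a k\<bar> - \<bar>b k\<bar>\<bar>)" by (rule sum_abs)
  also have "\<dots> \<le> (\<Sum>k\<in>A. \<bar>a k - b k\<bar>)" by (intro sum_mono) (rule abs_triangle_ineq3)
  finally show ?thesis .
qed

lemma abs_grid_le_differences:
  fixes E :: "nat \<Rightarrow> real"
  assumes N: "N1 > 0" "N2 > 0" and j: "j1 < N1" "j2 < N2"
  shows "\<bar>E (j1 + N1 * j2)\<bar> \<le>
      (\<Sum>i2<N2. \<Sum>i1<N1. \<bar>E (i1 + N1 * i2)\<bar>) / (real N1 * real N2)
    + (\<Sum>i2<N2. \<Sum>i1<N1. \<bar>E (i1 + N1 * succ_mod N2 i2) - E (i1 + N1 * i2)\<bar>) / real N1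
    + (\<Sum>i2<N2. \<Sum>i1<N1. \<bar>E (succ_mod N1 i1 + N1 * i2) - E (i1 + N1 * i2)\<bar>) / real N2
    + (\<Sum>i2<N2. \<Sum>i1<N1. \<bar>(E (succ_mod N1 i1 + N1 * succ_mod N2 i2) - E (i1 + N1 * succ_mod N2 i2))
                          - (E (succ_mod N1 i1 + N1 * i2) - E (i1 + N1 * i2))\<bar>)"
proof -
  define R where "R b = (\<Sum>k<N1. \<bar>E (k + N1 * b)\<bar>)" for b
  define T where "T b = (\<Sum>k<N1. \<bar>E (succ_mod N1 k + N1 * b) - E (k + N1 * b)\<bar>)" for b
  have s1: "\<bar>E (j1 + N1 * j2)\<bar> \<le> R j2 / real N1 + T j2"
    using abs_le_mean_plus_variation[OF N(1) j(1), of "\<lambda>i. E (i + N1 * j2)"] unfolding R_def T_def by simp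
  have Rnn: "0 \<le> R b" for b unfolding R_def by (simp add: sum_nonneg)
  have Tnn: "0 \<le> T b" for b unfolding T_def by (simp add: sum_nonneg)
  have s2: "R j2 \<le> (\<Sum>b<N2. R b) / real N2 + (\<Sum>b<N2. \<bar>R (succ_mod N2 b) - R b\<bar>)"
    using abs_le_mean_plus_variation[OF N(2) j(2), of R] by (simp add: abs_of_nonneg Rnn)
  have s3: "T j2 \<le> (\<Sum>b<N2. T b) / real N2 + (\<Sum>b<N2. \<bar>T (succ_mod N2 b) - T b\<bar>)"
    using abs_le_mean_plus_variation[OF N(2) j(2), of T] by (simp add: abs_of_nonneg Tnn)
  have r: "(\<Sum>b<N2. \<bar>R (succ_mod N2 b) - R b\<bar>) \<le> (\<Sum>i2<N2. \<Sum>i1<N1. \<bar>E (i1 + N1 * succ_mod N2 i2) - E (i1 + N1 * i2)\<bar>)"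
    unfolding R_def by (intro sum_mono abs_sum_abs_diff_le)
  have t: "(\<Sum>b<N2. \<bar>T (succ_mod N2 b) - T b\<bar>) \<le> (\<Sum>i2<N2. \<Sum>i1<N1. \<bar>(E (succ_mod N1 i1 + N1 * succ_mod N2 i2) - E (i1 + N1 * succ_mod N2 i2))
                          - (E (succ_mod N1 i1 + N1 * i2) - E (i1 + N1 * i2))\<bar>)"
    unfolding T_def by (intro sum_mono abs_sum_abs_diff_le)
  have "R j2 / real N1 \<le> ((\<Sum>b<N2. R b) / real N2 + (\<Sum>i2<N2. \<Sum>i1<N1. \<bar>E (i1 + N1 * succ_mod N2 i2) - E (i1 + N1 * i2)\<bar>)) / real N1"
    using s2 r N by (intro divide_right_mono) auto
  also have "\<dots> = (\<Sum>i2<N2. \<Sum>i1<N1. \<bar>E (i1 + N1 * i2)\<bar>) / (real N1 * real N2)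
    + (\<Sum>i2<N2. \<Sum>i1<N1. \<bar>E (i1 + N1 * succ_mod N2 i2) - E (i1 + N1 * i2)\<bar>) / real N1"
    unfolding R_def by (simp add: add_divide_distrib mult.commute)
  finally have A: "R j2 / real N1 \<le> \<dots>" .
  have B: "T j2 \<le> (\<Sum>i2<N2. \<Sum>i1<N1. \<bar>E (succ_mod N1 i1 + N1 * i2) - E (i1 + N1 * i2)\<bar>) / real N2
    + (\<Sum>i2<N2. \<Sum>i1<N1. \<bar>(E (succ_mod N1 i1 + N1 * succ_mod N2 i2) - E (i1 + N1 * succ_mod N2 i2))
                          - (E (succ_mod N1 i1 + N1 * i2) - E (i1 + N1 * i2))\<bar>)"
    using s3 t unfolding T_def by linarith
  show ?thesis using s1 A B by linarith
qed

lemma square_sum4_le: "(a + b + c + d)\<^sup>2 \<le> 4 * (a\<^sup>2 + b\<^sup>2 + c\<^sup>2 + (d::real)\<^sup>2)"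
proof -
  have "4 * (a\<^sup>2 + b\<^sup>2 + c\<^sup>2 + d\<^sup>2) - (a + b + c + d)\<^sup>2 =
    (a - b)\<^sup>2 + (a - c)\<^sup>2 + (a - d)\<^sup>2 + (b - c)\<^sup>2 + (b - d)\<^sup>2 + (c - d)\<^sup>2"
    by (simp add: power2_eq_square algebra_simps)
  moreover have "0 \<le> (a - b)\<^sup>2 + (a - c)\<^sup>2 + (a - d)\<^sup>2 + (b - c)\<^sup>2 + (b - d)\<^sup>2 + (c - d)\<^sup>2" by simp
  ultimately show ?thesis by linarith
qed

lemma sum_abs_mult_sq_le: "(\<Sum>m<n. \<bar>c * V m\<bar>)\<^sup>2 \<le> real n * c\<^sup>2 * (\<Sum>m<n. (V m)\<^sup>2)"
proof -
  have eq: "(\<Sum>m<n. \<bar>c * V m\<bar>\<^sup>2) = c\<^sup>2 * (\<Sum>m<n. (V m)\<^sup>2)"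
    by (simp add: power_mult_distrib sum_distrib_left)
  have "(\<Sum>m<n. \<bar>c * V m\<bar>)\<^sup>2 \<le> (\<Sum>m<n. \<bar>c * V m\<bar>\<^sup>2) * real n"
    using sum_squared_le_sum_of_squares[of "\<lambda>m. \<bar>c * V m\<bar>" "{..<n}"] by simp
  then show ?thesis unfolding eq by (simp add: mult_ac)
qed

lemma power2_divide_le:
  fixes S q :: real
  assumes "S\<^sup>2 \<le> B" "q > 0"
  shows "(S / q)\<^sup>2 \<le> B / q\<^sup>2"
  using assms by (simp add: power_divide divide_right_mono)

lemma mixed_difference_eq:
  assumes N: "N2 > 0" and h: "h1 \<noteq> 0" "h2 \<noteq> 0" and i: "i1 < N1" "i2 < N2"
  shows "(h1 * h2) * dyp h2 N1 N2 (dxp h1 N1 N2 E) (i1 + N1 * i2) =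
     (E (succ_mod N1 i1 + N1 * succ_mod N2 i2) - E (i1 + N1 * succ_mod N2 i2)) - (E (succ_mod N1 i1 + N1 * i2) - E (i1 + N1 * i2))"
proof -
  have "dyp h2 N1 N2 (dxp h1 N1 N2 E) (i1 + N1 * i2) =
     ((E (succ_mod N1 i1 + N1 * succ_mod N2 i2) - E (i1 + N1 * succ_mod N2 i2)) / h1 - (E (succ_mod N1 i1 + N1 * i2) - E (i1 + N1 * i2)) / h1) / h2"
    using i succ_mod_less by (simp add: dyp_at dxp_at)
  moreover have "h1 * h2 * ((a / h1 - b / h1) / h2) = a - b" for a b
    using h by (simp add: field_simps)
  ultimately show ?thesis by simp
qed

lemma sq_grid_le_differences:
  fixes E :: "nat \<Rightarrow> real"
  assumes N: "N1 > 0" "N2 > 0" and h: "h1 \<noteq> 0" "h2 \<noteq> 0" and m: "m < N1 * N2"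
  shows "(E m)\<^sup>2 \<le> 4 * ((\<Sum>k<N1 * N2. (E k)\<^sup>2) / (real N1 * real N2)
      + real N2 / real N1 * h2\<^sup>2 * (\<Sum>k<N1 * N2. (dyp h2 N1 N2 E k)\<^sup>2)
      + real N1 / real N2 * h1\<^sup>2 * (\<Sum>k<N1 * N2. (dxp h1 N1 N2 E k)\<^sup>2)
      + real N1 * real N2 * (h1 * h2)\<^sup>2 * (\<Sum>k<N1 * N2. (dyp h2 N1 N2 (dxp h1 N1 N2 E) k)\<^sup>2))"
proof -
  let ?n = "N1 * N2"
  define j1 where "j1 = m mod N1"
  define j2 where "j2 = m div N1"
  have j: "j1 < N1" "j2 < N2" "m = j1 + N1 * j2"
    using m N unfolding j1_def j2_def by (auto simp: less_mult_imp_div_less mult.commute)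
  define a where "a = (\<Sum>k<?n. \<bar>1 * E k\<bar>) / (real N1 * real N2)"
  define b where "b = (\<Sum>k<?n. \<bar>h2 * dyp h2 N1 N2 E k\<bar>) / real N1"
  define c where "c = (\<Sum>k<?n. \<bar>h1 * dxp h1 N1 N2 E k\<bar>) / real N2"
  define d where "d = (\<Sum>k<?n. \<bar>(h1 * h2) * dyp h2 N1 N2 (dxp h1 N1 N2 E) k\<bar>)"
  have raw: "\<bar>E m\<bar> \<le> a + b + c + d"
  proof -
    have ea: "(\<Sum>i2<N2. \<Sum>i1<N1. \<bar>E (i1 + N1 * i2)\<bar>) = (\<Sum>k<?n. \<bar>1 * E k\<bar>)"
      unfolding sum_lessThan_mult by simp
    have eb: "(\<Sum>i2<N2. \<Sum>i1<N1. \<bar>E (i1 + N1 * succ_mod N2 i2) - E (i1 + N1 * i2)\<bar>) = (\<Sum>k<?n. \<bar>h2 * dyp h2 N1 N2 E k\<bar>)"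
      unfolding sum_lessThan_mult using h by (intro sum.cong refl) (simp add: dyp_at)
    have ec: "(\<Sum>i2<N2. \<Sum>i1<N1. \<bar>E (succ_mod N1 i1 + N1 * i2) - E (i1 + N1 * i2)\<bar>) = (\<Sum>k<?n. \<bar>h1 * dxp h1 N1 N2 E k\<bar>)"
      unfolding sum_lessThan_mult using h by (intro sum.cong refl) (simp add: dxp_at)
    have ed: "(\<Sum>i2<N2. \<Sum>i1<N1. \<bar>(E (succ_mod N1 i1 + N1 * succ_mod N2 i2) - E (i1 + N1 * succ_mod N2 i2))
                          - (E (succ_mod N1 i1 + N1 * i2) - E (i1 + N1 * i2))\<bar>)
        = (\<Sum>k<?n. \<bar>(h1 * h2) * dyp h2 N1 N2 (dxp h1 N1 N2 E) k\<bar>)"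
      unfolding sum_lessThan_mult using h N by (intro sum.cong refl) (simp add: mixed_difference_eq)
    show ?thesis using abs_grid_le_differences[OF N j(1,2), of E] unfolding ea eb ec ed a_def b_def c_def d_def j(3) .
  qed
  have a2: "a\<^sup>2 \<le> (\<Sum>k<?n. (E k)\<^sup>2) / (real N1 * real N2)"
  proof -
    have "a\<^sup>2 \<le> (real ?n * 1\<^sup>2 * (\<Sum>k<?n. (E k)\<^sup>2)) / (real N1 * real N2)\<^sup>2"
      unfolding a_def using N by (intro power2_divide_le sum_abs_mult_sq_le) auto
    also have "\<dots> = (\<Sum>k<?n. (E k)\<^sup>2) / (real N1 * real N2)" using N by (simp add: power2_eq_square)
    finally show ?thesis .
  qed
  have b2: "b\<^sup>2 \<le> real N2 / real N1 * h2\<^sup>2 * (\<Sum>k<?n. (dyp h2 N1 N2 E k)\<^sup>2)"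
  proof -
    have "b\<^sup>2 \<le> (real ?n * h2\<^sup>2 * (\<Sum>k<?n. (dyp h2 N1 N2 E k)\<^sup>2)) / (real N1)\<^sup>2"
      unfolding b_def using N by (intro power2_divide_le sum_abs_mult_sq_le) auto
    also have "\<dots> = real N2 / real N1 * h2\<^sup>2 * (\<Sum>k<?n. (dyp h2 N1 N2 E k)\<^sup>2)" using N by (simp add: power2_eq_square)
    finally show ?thesis .
  qed
  have c2: "c\<^sup>2 \<le> real N1 / real N2 * h1\<^sup>2 * (\<Sum>k<?n. (dxp h1 N1 N2 E k)\<^sup>2)"
  proof -
    have "c\<^sup>2 \<le> (real ?n * h1\<^sup>2 * (\<Sum>k<?n. (dxp h1 N1 N2 E k)\<^sup>2)) / (real N2)\<^sup>2"
      unfolding c_def using N by (intro power2_divide_le sum_abs_mult_sq_le) auto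
    also have "\<dots> = real N1 / real N2 * h1\<^sup>2 * (\<Sum>k<?n. (dxp h1 N1 N2 E k)\<^sup>2)" using N by (simp add: power2_eq_square)
    finally show ?thesis .
  qed
  have d2: "d\<^sup>2 \<le> real N1 * real N2 * (h1 * h2)\<^sup>2 * (\<Sum>k<?n. (dyp h2 N1 N2 (dxp h1 N1 N2 E) k)\<^sup>2)"
    unfolding d_def using sum_abs_mult_sq_le[where n="?n" and c="h1 * h2"] by simp
  have "(E m)\<^sup>2 = \<bar>E m\<bar>\<^sup>2" by simp
  also have "\<dots> \<le> (a + b + c + d)\<^sup>2" using raw by (intro power_mono) auto
  also have "\<dots> \<le> 4 * (a\<^sup>2 + b\<^sup>2 + c\<^sup>2 + d\<^sup>2)" by (rule square_sum4_le)
  also have "\<dots> \<le> 4 * ((\<Sum>k<N1 * N2. (E k)\<^sup>2) / (real N1 * real N2)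
      + real N2 / real N1 * h2\<^sup>2 * (\<Sum>k<N1 * N2. (dyp h2 N1 N2 E k)\<^sup>2)
      + real N1 / real N2 * h1\<^sup>2 * (\<Sum>k<N1 * N2. (dxp h1 N1 N2 E k)\<^sup>2)
      + real N1 * real N2 * (h1 * h2)\<^sup>2 * (\<Sum>k<N1 * N2. (dyp h2 N1 N2 (dxp h1 N1 N2 E) k)\<^sup>2))"
    using a2 b2 c2 d2 by (intro mult_left_mono add_mono) auto
  finally show ?thesis .
qed

definition sobolev_const :: "real \<Rightarrow> real \<Rightarrow> real" where
  "sobolev_const l1 l2 = 4 * (1 / (l1 * l2) + l2 / l1 + l1 / l2 + l1 * l2)"

lemma sobolev_const_nonneg: "0 < l1 \<Longrightarrow> 0 < l2 \<Longrightarrow> 0 \<le> sobolev_const l1 l2"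
  unfolding sobolev_const_def by simp

lemma sq_grid_le_sobolev:
  assumes N: "N1 > 0" "N2 > 0" and l: "l1 > 0" "l2 > 0" and m: "m < N1 * N2"
  shows "(E m)\<^sup>2 \<le> sobolev_const l1 l2 * (norm_h (l1 / real N1) (l2 / real N2) N1 N2 E
      + norm_h (l1 / real N1) (l2 / real N2) N1 N2 (lap_h (l1 / real N1) (l2 / real N2) N1 N2 E))\<^sup>2"
proof -
  let ?n = "N1 * N2"
  define h1 where "h1 = l1 / real N1"
  define h2 where "h2 = l2 / real N2"
  have h: "h1 > 0" "h2 > 0" using N l unfolding h1_def h2_def by auto
  have hh: "0 \<le> h1 * h2" using h by simp
  define e where "e = norm_h h1 h2 N1 N2 E"
  define g where "g = norm_h h1 h2 N1 N2 (lap_h h1 h2 N1 N2 E)"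
  define S0 where "S0 = (\<Sum>k<?n. (E k)\<^sup>2)"
  define Sx where "Sx = (\<Sum>k<?n. (dxp h1 N1 N2 E k)\<^sup>2)"
  define Sy where "Sy = (\<Sum>k<?n. (dyp h2 N1 N2 E k)\<^sup>2)"
  define Sxy where "Sxy = (\<Sum>k<?n. (dyp h2 N1 N2 (dxp h1 N1 N2 E) k)\<^sup>2)"
  define Sl where "Sl = (\<Sum>k<?n. (lap_h h1 h2 N1 N2 E k)\<^sup>2)"
  have e0: "0 \<le> e" "0 \<le> g" unfolding e_def g_def using norm_h_nonneg[OF hh] by auto
  have e2: "e\<^sup>2 = h1 * h2 * S0" unfolding e_def S0_def by (rule norm_h_sq[OF hh])
  have g2: "g\<^sup>2 = h1 * h2 * Sl" unfolding g_def Sl_def by (rule norm_h_sq[OF hh])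
  have sup: "(E m)\<^sup>2 \<le> 4 * (S0 / (real N1 * real N2) + real N2 / real N1 * h2\<^sup>2 * Sy
      + real N1 / real N2 * h1\<^sup>2 * Sx + real N1 * real N2 * (h1 * h2)\<^sup>2 * Sxy)"
    unfolding S0_def Sx_def Sy_def Sxy_def using sq_grid_le_differences[OF N _ _ m, of h1 h2 E] h by simp
  have gr: "h1 * h2 * Sx + h1 * h2 * Sy \<le> e * g"
    using grad_norm_sq_le_norm_lap[OF N h, of E] unfolding grad_norm_sq_eq[OF hh] e_def g_def Sx_def Sy_def
    by (simp add: distrib_left)
  have Sx0: "0 \<le> h1 * h2 * Sx" "0 \<le> h1 * h2 * Sy" "0 \<le> h1 * h2 * Sxy"
    unfolding Sx_def Sy_def Sxy_def using hh by (simp_all add: sum_nonneg)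
  have mixed: "h1 * h2 * Sxy \<le> g\<^sup>2 / 2"
  proof -
    have "2 * Sxy \<le> Sl" unfolding Sxy_def Sl_def using sum_sq_mixed_difference_le[OF N, of h1 h2 E] h by simp
    then have "h1 * h2 * (2 * Sxy) \<le> h1 * h2 * Sl" using hh by (rule mult_left_mono)
    then show ?thesis unfolding g2 by simp
  qed
  have F1: "S0 / (real N1 * real N2) = e\<^sup>2 / (l1 * l2)"
    unfolding e2 h1_def h2_def using N l by (simp add: field_simps)
  have F2: "real N2 / real N1 * h2\<^sup>2 * Sy = l2 / l1 * (h1 * h2 * Sy)"
    unfolding h1_def h2_def using N l by (simp add: field_simps power2_eq_square)
  have F3: "real N1 / real N2 * h1\<^sup>2 * Sx = l1 / l2 * (h1 * h2 * Sx)"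
    unfolding h1_def h2_def using N l by (simp add: field_simps power2_eq_square)
  have F4: "real N1 * real N2 * (h1 * h2)\<^sup>2 * Sxy = l1 * l2 * (h1 * h2 * Sxy)"
    unfolding h1_def h2_def using N l by (simp add: field_simps power2_eq_square)
  have p1: "e\<^sup>2 \<le> (e + g)\<^sup>2" "e * g \<le> (e + g)\<^sup>2" "g\<^sup>2 / 2 \<le> (e + g)\<^sup>2"
    using e0 by (auto simp: power2_eq_square algebra_simps)
  have "(E m)\<^sup>2 \<le> 4 * (e\<^sup>2 / (l1 * l2) + l2 / l1 * (h1 * h2 * Sy) + l1 / l2 * (h1 * h2 * Sx) + l1 * l2 * (h1 * h2 * Sxy))"
    using sup unfolding F1 F2 F3 F4 .
  also have "\<dots> \<le> 4 * ((e + g)\<^sup>2 / (l1 * l2) + l2 / l1 * (e + g)\<^sup>2 + l1 / l2 * (e + g)\<^sup>2 + l1 * l2 * (e + g)\<^sup>2)"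
  proof -
    have a: "e\<^sup>2 / (l1 * l2) \<le> (e + g)\<^sup>2 / (l1 * l2)" using p1 l by (intro divide_right_mono) auto
    have b: "l2 / l1 * (h1 * h2 * Sy) \<le> l2 / l1 * (e + g)\<^sup>2"
      using gr Sx0 p1 l by (intro mult_left_mono) auto
    have c: "l1 / l2 * (h1 * h2 * Sx) \<le> l1 / l2 * (e + g)\<^sup>2"
      using gr Sx0 p1 l by (intro mult_left_mono) auto
    have d: "l1 * l2 * (h1 * h2 * Sxy) \<le> l1 * l2 * (e + g)\<^sup>2"
      using mixed p1 l by (intro mult_left_mono) auto
    show ?thesis using a b c d by simp
  qed
  also have "\<dots> = sobolev_const l1 l2 * (e + g)\<^sup>2" unfolding sobolev_const_def by (simp add: algebra_simps add_divide_distrib)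
  finally show ?thesis unfolding e_def g_def h1_def h2_def .
qed

lemma abs_grid_le_sobolev:
  assumes N: "N1 > 0" "N2 > 0" and l: "l1 > 0" "l2 > 0" and m: "m < N1 * N2"
  shows "\<bar>E m\<bar> \<le> sqrt (sobolev_const l1 l2) * (norm_h (l1 / real N1) (l2 / real N2) N1 N2 E
      + norm_h (l1 / real N1) (l2 / real N2) N1 N2 (lap_h (l1 / real N1) (l2 / real N2) N1 N2 E))"
proof -
  let ?S = "norm_h (l1 / real N1) (l2 / real N2) N1 N2 E
      + norm_h (l1 / real N1) (l2 / real N2) N1 N2 (lap_h (l1 / real N1) (l2 / real N2) N1 N2 E)"
  have "0 \<le> l1 / real N1 * (l2 / real N2)" using l by simp
  then have S0: "0 \<le> ?S" using norm_h_nonneg by (auto intro: add_nonneg_nonneg)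
  have "sqrt ((E m)\<^sup>2) \<le> sqrt (sobolev_const l1 l2 * ?S\<^sup>2)"
    using sq_grid_le_sobolev[OF N l m] by (rule real_sqrt_le_mono)
  then show ?thesis using S0 by (simp add: real_sqrt_mult)
qed

section \<open>Skew-symmetry of the spectral operators\<close>

definition skew_symmetric :: "(nat \<Rightarrow> nat \<Rightarrow> real) \<Rightarrow> bool" where
  "skew_symmetric M \<longleftrightarrow> (\<forall>i k. M k i = - M i k)"

lemma idm_commute: "idm k i = idm i k"
  unfolding idm_def by auto

lemma Dspec1_transpose: "Dspec 1 N xL len k j = - Dspec 1 N xL len j k"
  using Dspec_transpose[of 1 N xL len k j] by simp

lemma Dspec2_transpose: "Dspec 2 N xL len k j = Dspec 2 N xL len j k"
  using Dspec_transpose[of 2 N xL len k j] by simp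

lemma Dspec3_transpose: "Dspec 3 N xL len k j = - Dspec 3 N xL len j k"
  using Dspec_transpose[of 3 N xL len k j] by simp

lemma skew_symmetric_Bmat: "skew_symmetric (Bmat xL xR yL yR N1 N2)"
  unfolding skew_symmetric_def Bmat_def kron_def
proof (intro allI)
  fix i k
  show "idm (k div N1) (i div N1) * Dspec 3 N1 xL (xR - xL) (k mod N1) (i mod N1) +
       Dspec 2 N2 yL (yR - yL) (k div N1) (i div N1) * Dspec 1 N1 xL (xR - xL) (k mod N1) (i mod N1) =
       - (idm (i div N1) (k div N1) * Dspec 3 N1 xL (xR - xL) (i mod N1) (k mod N1) +
          Dspec 2 N2 yL (yR - yL) (i div N1) (k div N1) * Dspec 1 N1 xL (xR - xL) (i mod N1) (k mod N1))"
    unfolding Dspec3_transpose[of N1 xL "xR - xL" "k mod N1"] Dspec2_transpose[of N2 yL "yR - yL" "k div N1"]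
      Dspec1_transpose[of N1 xL "xR - xL" "k mod N1"] idm_commute[of "k div N1"] by simp
qed

lemma skew_symmetric_Lmat: "skew_symmetric (Lmat xL xR yL yR N1 N2)"
  unfolding skew_symmetric_def Lmat_def kron_def
proof (intro allI)
  fix i k
  show "idm (k div N1) (i div N1) * Dspec 1 N1 xL (xR - xL) (k mod N1) (i mod N1) +
       Dspec 1 N2 yL (yR - yL) (k div N1) (i div N1) * idm (k mod N1) (i mod N1) =
       - (idm (i div N1) (k div N1) * Dspec 1 N1 xL (xR - xL) (i mod N1) (k mod N1) +
          Dspec 1 N2 yL (yR - yL) (i div N1) (k div N1) * idm (i mod N1) (k mod N1))"
    unfolding Dspec1_transpose[of N1 xL "xR - xL" "k mod N1"] Dspec1_transpose[of N2 yL "yR - yL" "k div N1"]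
      idm_commute[of "k div N1"] idm_commute[of "k mod N1"] by simp
qed

lemma skew_symmetric_inner_swap:
  assumes "skew_symmetric M"
  shows "(\<Sum>i<n. u i * mat_vec n M w i) = - (\<Sum>i<n. w i * mat_vec n M u i)"
proof -
  have "(\<Sum>i<n. u i * mat_vec n M w i) = (\<Sum>i<n. \<Sum>k<n. M i k * u i * w k)"
    unfolding mat_vec_def by (simp add: sum_distrib_left algebra_simps)
  also have "\<dots> = (\<Sum>k<n. \<Sum>i<n. M i k * u i * w k)" by (rule sum.swap)
  also have "\<dots> = (\<Sum>k<n. \<Sum>i<n. - (M k i * w k * u i))"
  proof (intro sum.cong refl)
    fix i k
    have "M i k = - M k i" using assms unfolding skew_symmetric_def by blast
    then show "M i k * u i * w k = - (M k i * w k * u i)" by simp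
  qed
  also have "\<dots> = - (\<Sum>i<n. w i * mat_vec n M u i)"
    unfolding mat_vec_def by (simp add: sum_negf sum_distrib_left algebra_simps)
  finally show ?thesis .
qed

lemma skew_symmetric_inner_self:
  assumes "skew_symmetric M"
  shows "(\<Sum>i<n. u i * mat_vec n M u i) = 0"
  using skew_symmetric_inner_swap[OF assms, of u n u] by simp

lemma mat_vec_add: "mat_vec n M (\<lambda>k. X k + Y k) i = mat_vec n M X i + mat_vec n M Y i"
  unfolding mat_vec_def by (simp add: sum.distrib algebra_simps)

lemma mat_vec_diff: "mat_vec n M (\<lambda>k. X k - Y k) i = mat_vec n M X i - mat_vec n M Y i"
  unfolding mat_vec_def by (simp add: sum_subtractf algebra_simps)

lemma mat_vec_lincomb: "mat_vec n M (\<lambda>m. a * X m + b * Y m) i = a * mat_vec n M X i + b * mat_vec n M Y i"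
  unfolding mat_vec_def by (simp add: sum.distrib sum_distrib_left algebra_simps)

lemma mat_vec_Dmat:
  "mat_vec n (Dmat p xL xR yL yR N1 N2 W) X i =
     mat_vec n (Bmat xL xR yL yR N1 N2) X i + mat_vec n (Lmat xL xR yL yR N1 N2) X i
   + (W i ^ p * mat_vec n (Lmat xL xR yL yR N1 N2) X i
      + mat_vec n (Lmat xL xR yL yR N1 N2) (\<lambda>k. W k ^ p * X k) i) / (real p + 2)"
proof -
  let ?B = "Bmat xL xR yL yR N1 N2" and ?L = "Lmat xL xR yL yR N1 N2" and ?q = "real p + 2"
  have entry: "Dmat p xL xR yL yR N1 N2 W i k * X k =
     ?B i k * X k + ?L i k * X k + (W i ^ p * (?L i k * X k) + ?L i k * (W k ^ p * X k)) / ?q" for k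
    unfolding Dmat_def by (simp add: distrib_right add_divide_distrib mult.assoc mult.left_commute)
  have "mat_vec n (Dmat p xL xR yL yR N1 N2 W) X i =
     (\<Sum>k<n. ?B i k * X k + ?L i k * X k + (W i ^ p * (?L i k * X k) + ?L i k * (W k ^ p * X k)) / ?q)"
    unfolding mat_vec_def by (simp only: entry)
  also have "\<dots> = (\<Sum>k<n. ?B i k * X k) + (\<Sum>k<n. ?L i k * X k)
       + (W i ^ p * (\<Sum>k<n. ?L i k * X k) + (\<Sum>k<n. ?L i k * (W k ^ p * X k))) / ?q"
    by (simp only: sum.distrib sum_divide_distrib[symmetric] sum_distrib_left)
  finally show ?thesis unfolding mat_vec_def .
qed

lemma inner_Dmat_difference_eq:
  fixes X Y WU WV :: "nat \<Rightarrow> real"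
  shows "(\<Sum>i<n. (mat_vec n (Dmat p xL xR yL yR N1 N2 WU) X i - mat_vec n (Dmat p xL xR yL yR N1 N2 WV) Y i) * (X i - Y i))
    = ((\<Sum>i<n. (X i - Y i) * (WU i ^ p - WV i ^ p) * mat_vec n (Lmat xL xR yL yR N1 N2) Y i)
      - (\<Sum>i<n. ((WU i ^ p - WV i ^ p) * Y i) * mat_vec n (Lmat xL xR yL yR N1 N2) (\<lambda>k. X k - Y k) i)) / (real p + 2)"
proof -
  let ?B = "Bmat xL xR yL yR N1 N2" and ?L = "Lmat xL xR yL yR N1 N2" and ?q = "real p + 2"
  define E where "E k = X k - Y k" for k
  define a where "a k = WU k ^ p" for k
  define d where "d k = WU k ^ p - WV k ^ p" for k
  define dY where "dY k = d k * Y k" for k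
  have LX: "mat_vec n ?L X i = mat_vec n ?L E i + mat_vec n ?L Y i" for i
    unfolding E_def mat_vec_diff by simp
  have BX: "mat_vec n ?B X i - mat_vec n ?B Y i = mat_vec n ?B E i" for i
    unfolding E_def mat_vec_diff by simp
  have LW: "mat_vec n ?L (\<lambda>k. WU k ^ p * X k) i - mat_vec n ?L (\<lambda>k. WV k ^ p * Y k) i
      = mat_vec n ?L (\<lambda>k. a k * E k) i + mat_vec n ?L dY i" for i
  proof -
    have "(\<lambda>k. WU k ^ p * X k) = (\<lambda>k. (a k * E k + dY k) + WV k ^ p * Y k)"
      unfolding a_def E_def dY_def d_def by (simp add: fun_eq_iff algebra_simps)
    then show ?thesis by (simp add: mat_vec_add)
  qed
  have pointwise: "(mat_vec n (Dmat p xL xR yL yR N1 N2 WU) X i - mat_vec n (Dmat p xL xR yL yR N1 N2 WV) Y i) * E i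
     = E i * mat_vec n ?B E i + E i * mat_vec n ?L E i
       + (E i * a i * mat_vec n ?L E i + E i * mat_vec n ?L (\<lambda>k. a k * E k) i) / ?q
       + (E i * d i * mat_vec n ?L Y i + E i * mat_vec n ?L dY i) / ?q" for i
  proof -
    have "mat_vec n (Dmat p xL xR yL yR N1 N2 WU) X i - mat_vec n (Dmat p xL xR yL yR N1 N2 WV) Y i
      = (mat_vec n ?B X i - mat_vec n ?B Y i) + (mat_vec n ?L X i - mat_vec n ?L Y i)
        + (WU i ^ p * mat_vec n ?L X i - WV i ^ p * mat_vec n ?L Y i
          + (mat_vec n ?L (\<lambda>k. WU k ^ p * X k) i - mat_vec n ?L (\<lambda>k. WV k ^ p * Y k) i)) / ?q"
      unfolding mat_vec_Dmat by (simp add: diff_divide_distrib add_divide_distrib)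
    also have "\<dots> = mat_vec n ?B E i + mat_vec n ?L E i
        + (a i * mat_vec n ?L E i + mat_vec n ?L (\<lambda>k. a k * E k) i) / ?q
        + (d i * mat_vec n ?L Y i + mat_vec n ?L dY i) / ?q"
      unfolding BX LW LX by (simp add: a_def d_def algebra_simps add_divide_distrib diff_divide_distrib)
    finally show ?thesis by (simp add: algebra_simps add_divide_distrib)
  qed
  have B_part: "(\<Sum>i<n. E i * mat_vec n ?B E i) = 0"
    by (rule skew_symmetric_inner_self[OF skew_symmetric_Bmat])
  have L_part: "(\<Sum>i<n. E i * mat_vec n ?L E i) = 0"
    by (rule skew_symmetric_inner_self[OF skew_symmetric_Lmat])
  have aE_part: "(\<Sum>i<n. E i * a i * mat_vec n ?L E i) + (\<Sum>i<n. E i * mat_vec n ?L (\<lambda>k. a k * E k) i) = 0"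
    using skew_symmetric_inner_swap[OF skew_symmetric_Lmat, where u = E and n = n and w = "\<lambda>k. a k * E k"]
    by (simp add: mult_ac)
  have dY_part: "(\<Sum>i<n. E i * mat_vec n ?L dY i) = - (\<Sum>i<n. dY i * mat_vec n ?L E i)"
    by (rule skew_symmetric_inner_swap[OF skew_symmetric_Lmat])
  have "(\<Sum>i<n. (mat_vec n (Dmat p xL xR yL yR N1 N2 WU) X i - mat_vec n (Dmat p xL xR yL yR N1 N2 WV) Y i) * E i)
     = (\<Sum>i<n. E i * mat_vec n ?B E i) + (\<Sum>i<n. E i * mat_vec n ?L E i)
       + ((\<Sum>i<n. E i * a i * mat_vec n ?L E i) + (\<Sum>i<n. E i * mat_vec n ?L (\<lambda>k. a k * E k) i)) / ?q
       + ((\<Sum>i<n. E i * d i * mat_vec n ?L Y i) + (\<Sum>i<n. E i * mat_vec n ?L dY i)) / ?q"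
    unfolding pointwise by (simp only: sum.distrib sum_divide_distrib[symmetric])
  also have "\<dots> = ((\<Sum>i<n. E i * d i * mat_vec n ?L Y i) - (\<Sum>i<n. dY i * mat_vec n ?L E i)) / ?q"
    unfolding B_part L_part aE_part dY_part by simp
  finally show ?thesis unfolding E_def d_def dY_def .
qed

lemma abs_power_diff_le:
  fixes x y M :: real
  assumes "\<bar>x\<bar> \<le> M" "\<bar>y\<bar> \<le> M"
  shows "\<bar>x ^ p - y ^ p\<bar> \<le> real p * M ^ (p - 1) * \<bar>x - y\<bar>"
proof -
  have "\<bar>\<Sum>i<p. y ^ (p - Suc i) * x ^ i\<bar> \<le> (\<Sum>i<p. \<bar>y ^ (p - Suc i) * x ^ i\<bar>)" by (rule sum_abs)
  also have "\<dots> \<le> (\<Sum>i<p. M ^ (p - 1))"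
  proof (rule sum_mono)
    fix i assume i: "i \<in> {..<p}"
    have "\<bar>y ^ (p - Suc i) * x ^ i\<bar> = \<bar>y\<bar> ^ (p - Suc i) * \<bar>x\<bar> ^ i" by (simp add: abs_mult power_abs)
    also have "\<dots> \<le> M ^ (p - Suc i) * M ^ i"
      using assms by (intro mult_mono power_mono) auto
    also have "\<dots> = M ^ (p - 1)" using i by (simp add: power_add[symmetric])
    finally show "\<bar>y ^ (p - Suc i) * x ^ i\<bar> \<le> M ^ (p - 1)" .
  qed
  finally have sum_bound: "\<bar>\<Sum>i<p. y ^ (p - Suc i) * x ^ i\<bar> \<le> real p * M ^ (p - 1)" by simp
  have "\<bar>x ^ p - y ^ p\<bar> = \<bar>x - y\<bar> * \<bar>\<Sum>i<p. y ^ (p - Suc i) * x ^ i\<bar>"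
    unfolding power_diff_sumr2[of x p y] by (simp add: abs_mult)
  also have "\<dots> \<le> \<bar>x - y\<bar> * (real p * M ^ (p - 1))"
    by (rule mult_left_mono[OF sum_bound]) simp
  finally show ?thesis by (simp add: mult_ac)
qed

lemma norm_h_power_diff_le:
  assumes hh: "0 \<le> h1 * h2" and M0: "0 \<le> M0" "\<And>m. m < N1 * N2 \<Longrightarrow> \<bar>WU m\<bar> \<le> M0"
    "\<And>m. m < N1 * N2 \<Longrightarrow> \<bar>WV m\<bar> \<le> M0"
  shows "norm_h h1 h2 N1 N2 (\<lambda>m. WU m ^ p - WV m ^ p) \<le> real p * M0 ^ (p - 1) * norm_h h1 h2 N1 N2 (\<lambda>m. WU m - WV m)"
proof (rule norm_h_mono[OF hh])
  show "0 \<le> real p * M0 ^ (p - 1)" using M0 by simp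
  fix m assume "m < N1 * N2"
  then show "\<bar>WU m ^ p - WV m ^ p\<bar> \<le> real p * M0 ^ (p - 1) * \<bar>WU m - WV m\<bar>"
    using M0 by (intro abs_power_diff_le) auto
qed

lemma inner_Dmat_difference_le:
  fixes X Y WU WV :: "nat \<Rightarrow> real"
  assumes N: "N1 > 0" "N2 > 0" "even N1" "even N2" and l: "xL < xR" "yL < yR"
    and h: "h1 = (xR - xL) / real N1" "h2 = (yR - yL) / real N2"
    and M0: "0 \<le> M0" "\<And>m. m < N1 * N2 \<Longrightarrow> \<bar>WU m\<bar> \<le> M0" "\<And>m. m < N1 * N2 \<Longrightarrow> \<bar>WV m\<bar> \<le> M0"
    and K0: "0 \<le> K0" "\<And>m. m < N1 * N2 \<Longrightarrow> \<bar>Y m\<bar> \<le> K0"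
    and LY: "norm_h h1 h2 N1 N2 (mat_vec (N1 * N2) (Lmat xL xR yL yR N1 N2) Y) \<le> LY0"
  shows "inner_h h1 h2 N1 N2 (\<lambda>m. mat_vec (N1 * N2) (Dmat p xL xR yL yR N1 N2 WU) X m
                               - mat_vec (N1 * N2) (Dmat p xL xR yL yR N1 N2 WV) Y m) (\<lambda>m. X m - Y m)
    \<le> real p * M0 ^ (p - 1) * norm_h h1 h2 N1 N2 (\<lambda>m. WU m - WV m)
       * (sqrt (sobolev_const (xR - xL) (yR - yL)) * LY0 + 2 * K0)
       * (norm_h h1 h2 N1 N2 (\<lambda>m. X m - Y m) + norm_h h1 h2 N1 N2 (lap_h h1 h2 N1 N2 (\<lambda>m. X m - Y m)))"
proof -
  let ?n = "N1 * N2" and ?L = "Lmat xL xR yL yR N1 N2" and ?q = "real p + 2"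
  let ?nh = "norm_h h1 h2 N1 N2"
  define E where "E m = X m - Y m" for m
  define d where "d m = WU m ^ p - WV m ^ p" for m
  define P where "P = real p * M0 ^ (p - 1)"
  define A where "A = ?nh (\<lambda>m. WU m - WV m)"
  define e where "e = ?nh E"
  define g where "g = ?nh (lap_h h1 h2 N1 N2 E)"
  define S where "S = sqrt (sobolev_const (xR - xL) (yR - yL)) * (e + g)"
  have hh: "0 \<le> h1 * h2" unfolding h using N l by simp
  have e0: "0 \<le> e" "0 \<le> g" unfolding e_def g_def using norm_h_nonneg[OF hh] by auto
  have P0: "0 \<le> P" unfolding P_def using M0 by simp
  have A0: "0 \<le> A" unfolding A_def using norm_h_nonneg[OF hh] by auto
  have S0: "0 \<le> S" unfolding S_def using e0 sobolev_const_nonneg[of "xR - xL" "yR - yL"] l by simp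
  have LY0: "0 \<le> LY0" using LY norm_h_nonneg[OF hh] by (meson order_trans)
  have E_bound: "\<bar>E m\<bar> \<le> S" if "m < ?n" for m
    unfolding S_def e_def g_def h
    using abs_grid_le_sobolev[OF N(1,2) _ _ that, of "xR - xL" "yR - yL" E] l by simp
  have d_bound: "?nh d \<le> P * A"
    unfolding A_def P_def d_def by (rule norm_h_power_diff_le[OF hh M0])
  have LE: "?nh (mat_vec ?n ?L E) \<le> 2 * (e + g)"
    unfolding e_def g_def by (rule norm_h_Lmat_apply_le[OF N l h])
  have T1: "\<bar>h1 * h2 * (\<Sum>i<?n. E i * d i * mat_vec ?n ?L Y i)\<bar> \<le> S * (?nh d * ?nh (mat_vec ?n ?L Y))"
    using S0 E_bound by (rule abs_weighted_inner_le[OF hh])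
  have T2: "\<bar>h1 * h2 * (\<Sum>i<?n. Y i * d i * mat_vec ?n ?L E i)\<bar> \<le> K0 * (?nh d * ?nh (mat_vec ?n ?L E))"
    using K0 by (rule abs_weighted_inner_le[OF hh])
  define R where "R = S * (?nh d * ?nh (mat_vec ?n ?L Y)) + K0 * (?nh d * ?nh (mat_vec ?n ?L E))"
  have R0: "0 \<le> R" unfolding R_def using S0 K0 norm_h_nonneg[OF hh] by simp
  have identity: "(\<Sum>i<?n. (mat_vec ?n (Dmat p xL xR yL yR N1 N2 WU) X i
        - mat_vec ?n (Dmat p xL xR yL yR N1 N2 WV) Y i) * E i)
     = ((\<Sum>i<?n. E i * d i * mat_vec ?n ?L Y i) - (\<Sum>i<?n. (d i * Y i) * mat_vec ?n ?L E i)) / ?q"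
    unfolding E_def d_def by (rule inner_Dmat_difference_eq)
  have reorder: "(\<Sum>i<?n. (d i * Y i) * mat_vec ?n ?L E i) = (\<Sum>i<?n. Y i * d i * mat_vec ?n ?L E i)"
    by (simp add: mult_ac)
  have "inner_h h1 h2 N1 N2 (\<lambda>m. mat_vec ?n (Dmat p xL xR yL yR N1 N2 WU) X m
                               - mat_vec ?n (Dmat p xL xR yL yR N1 N2 WV) Y m) (\<lambda>m. X m - Y m)
      = (h1 * h2 * (\<Sum>i<?n. E i * d i * mat_vec ?n ?L Y i)
         - h1 * h2 * (\<Sum>i<?n. Y i * d i * mat_vec ?n ?L E i)) / ?q"
    unfolding inner_h_def E_def[symmetric] identity reorder by (simp add: right_diff_distrib)
  also have "\<dots> \<le> R / ?q"
  proof -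
    have "h1 * h2 * (\<Sum>i<?n. E i * d i * mat_vec ?n ?L Y i)
         - h1 * h2 * (\<Sum>i<?n. Y i * d i * mat_vec ?n ?L E i) \<le> R"
      using T1 T2 unfolding R_def abs_le_iff by linarith
    then show ?thesis by (simp add: divide_right_mono)
  qed
  also have "\<dots> \<le> R"
  proof -
    have "R / ?q \<le> R / 1" by (rule divide_left_mono) (use R0 in auto)
    then show ?thesis by simp
  qed
  also have "R \<le> S * (P * A * LY0) + K0 * (P * A * (2 * (e + g)))"
    unfolding R_def
  proof (intro add_mono mult_left_mono)
    show "?nh d * ?nh (mat_vec ?n ?L Y) \<le> P * A * LY0"
      using d_bound LY norm_h_nonneg[OF hh] P0 A0 by (intro mult_mono) auto
    show "?nh d * ?nh (mat_vec ?n ?L E) \<le> P * A * (2 * (e + g))"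
      using d_bound LE norm_h_nonneg[OF hh] P0 A0 by (intro mult_mono) auto
  qed (use S0 K0 in auto)
  also have "\<dots> = P * A * (sqrt (sobolev_const (xR - xL) (yR - yL)) * LY0 + 2 * K0) * (e + g)"
    unfolding S_def by (simp add: algebra_simps)
  finally show ?thesis unfolding P_def A_def e_def g_def E_def .
qed

definition step_const :: "nat \<Rightarrow> real \<Rightarrow> real \<Rightarrow> real \<Rightarrow> real" where
  "step_const p C0 l1 l2 =
     real p * (2 * \<bar>C0\<bar>) ^ (p - 1) * (sqrt (sobolev_const l1 l2) * (3 * \<bar>C0\<bar>) + 2 * \<bar>C0\<bar>)"

lemma step_const_nonneg: "0 < l1 \<Longrightarrow> 0 < l2 \<Longrightarrow> 0 \<le> step_const p C0 l1 l2"
  unfolding step_const_def using sobolev_const_nonneg[of l1 l2] by simp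

text \<open>In the paper's notation \<open>U1, U0\<close> are \<open>U\<^sup>n\<^sup>+\<^sup>1, U\<^sup>n\<close>, and \<open>WU\<close> is \<open>U\<^sup>0\<close> in the first
  step and the extrapolation \<open>(3 U\<^sup>n - U\<^sup>n\<^sup>-\<^sup>1) / 2\<close> afterwards, and likewise for \<open>V\<close>.\<close>

lemma averaged_step_estimate:
  fixes U1 U0 V1 V0 WU WV :: "nat \<Rightarrow> real"
  assumes N: "N1 > 0" "N2 > 0" "even N1" "even N2" and l: "xL < xR" "yL < yR"
    and h: "h1 = (xR - xL) / real N1" "h2 = (yR - yL) / real N2"
    and WU: "\<And>m. m < N1 * N2 \<Longrightarrow> \<bar>WU m\<bar> \<le> 2 * \<bar>C0\<bar>"
    and WV: "\<And>m. m < N1 * N2 \<Longrightarrow> \<bar>WV m\<bar> \<le> 2 * \<bar>C0\<bar>"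
    and V1: "\<And>m. m < N1 * N2 \<Longrightarrow> \<bar>V1 m\<bar> \<le> \<bar>C0\<bar>"
    and V0: "\<And>m. m < N1 * N2 \<Longrightarrow> \<bar>V0 m\<bar> \<le> \<bar>C0\<bar>"
    and G1: "sqrt (grad_norm_sq h1 h2 N1 N2 V1) \<le> C0"
    and G0: "sqrt (grad_norm_sq h1 h2 N1 N2 V0) \<le> C0"
  shows "inner_h h1 h2 N1 N2
      (\<lambda>m. mat_vec (N1 * N2) (Dmat p xL xR yL yR N1 N2 WU) (\<lambda>m. (U1 m + U0 m) / 2) m -
           mat_vec (N1 * N2) (Dmat p xL xR yL yR N1 N2 WV) (\<lambda>m. (V1 m + V0 m) / 2) m)
      (\<lambda>m. (U1 m - V1 m + (U0 m - V0 m)) / 2)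
    \<le> step_const p C0 (xR - xL) (yR - yL) * norm_h h1 h2 N1 N2 (\<lambda>m. WU m - WV m)
      * (norm_h h1 h2 N1 N2 (\<lambda>m. (U1 m - V1 m + (U0 m - V0 m)) / 2)
       + norm_h h1 h2 N1 N2 (lap_h h1 h2 N1 N2 (\<lambda>m. (U1 m - V1 m + (U0 m - V0 m)) / 2)))"
proof -
  let ?n = "N1 * N2" and ?L = "Lmat xL xR yL yR N1 N2"
  define X where "X m = (U1 m + U0 m) / 2" for m
  define Y where "Y m = (V1 m + V0 m) / 2" for m
  have hh: "0 \<le> h1 * h2" unfolding h using N l by simp
  have XY: "(\<lambda>m. X m - Y m) = (\<lambda>m. (U1 m - V1 m + (U0 m - V0 m)) / 2)"
    unfolding X_def Y_def by (simp add: fun_eq_iff field_simps)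
  have Y_bound: "\<bar>Y m\<bar> \<le> \<bar>C0\<bar>" if "m < ?n" for m
    using V1[OF that] V0[OF that] unfolding Y_def by auto
  have LY: "norm_h h1 h2 N1 N2 (mat_vec ?n ?L Y) \<le> 3 * \<bar>C0\<bar>"
  proof -
    have "Y = (\<lambda>m. 1 / 2 * V1 m + 1 / 2 * V0 m)" unfolding Y_def by (simp add: fun_eq_iff)
    then have Y_split: "mat_vec ?n ?L Y = (\<lambda>i. 1 / 2 * mat_vec ?n ?L V1 i + 1 / 2 * mat_vec ?n ?L V0 i)"
      by (intro ext) (simp only: mat_vec_lincomb)
    have "norm_h h1 h2 N1 N2 (mat_vec ?n ?L Y) \<le>
        \<bar>1 / 2\<bar> * norm_h h1 h2 N1 N2 (mat_vec ?n ?L V1) + \<bar>1 / 2\<bar> * norm_h h1 h2 N1 N2 (mat_vec ?n ?L V0)"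
      unfolding Y_split by (rule norm_h_lincomb_le[OF hh])
    also have "\<dots> \<le> 1 / 2 * (3 * \<bar>C0\<bar>) + 1 / 2 * (3 * \<bar>C0\<bar>)"
      using norm_h_Lmat_apply_le_grad_bound[OF N l h G1] norm_h_Lmat_apply_le_grad_bound[OF N l h G0]
      by (intro add_mono) auto
    finally show ?thesis by simp
  qed
  have "inner_h h1 h2 N1 N2
      (\<lambda>m. mat_vec ?n (Dmat p xL xR yL yR N1 N2 WU) X m - mat_vec ?n (Dmat p xL xR yL yR N1 N2 WV) Y m)
      (\<lambda>m. X m - Y m)
    \<le> real p * (2 * \<bar>C0\<bar>) ^ (p - 1) * norm_h h1 h2 N1 N2 (\<lambda>m. WU m - WV m)
       * (sqrt (sobolev_const (xR - xL) (yR - yL)) * (3 * \<bar>C0\<bar>) + 2 * \<bar>C0\<bar>)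
       * (norm_h h1 h2 N1 N2 (\<lambda>m. X m - Y m) + norm_h h1 h2 N1 N2 (lap_h h1 h2 N1 N2 (\<lambda>m. X m - Y m)))"
    by (rule inner_Dmat_difference_le[OF N l h _ WU WV _ Y_bound LY]) auto
  then show ?thesis unfolding XY unfolding X_def Y_def step_const_def by (simp add: algebra_simps)
qed

lemma sq_half_sum4_le: "((a + b + c + d) / 2)\<^sup>2 \<le> a\<^sup>2 + b\<^sup>2 + c\<^sup>2 + (d::real)\<^sup>2"
  using square_sum4_le[of a b c d] by (simp add: power_divide)

lemma sq_norm_h_average_le:
  assumes hh: "0 \<le> h1 * h2"
  shows "(norm_h h1 h2 N1 N2 (\<lambda>m. (A m + B m) / 2) + norm_h h1 h2 N1 N2 (lap_h h1 h2 N1 N2 (\<lambda>m. (A m + B m) / 2)))\<^sup>2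
    \<le> (norm_h h1 h2 N1 N2 A)\<^sup>2 + (norm_h h1 h2 N1 N2 B)\<^sup>2
        + (norm_h h1 h2 N1 N2 (lap_h h1 h2 N1 N2 A))\<^sup>2 + (norm_h h1 h2 N1 N2 (lap_h h1 h2 N1 N2 B))\<^sup>2"
proof -
  let ?nh = "norm_h h1 h2 N1 N2" and ?lap = "lap_h h1 h2 N1 N2"
  have avg: "(\<lambda>m. (A m + B m) / 2) = (\<lambda>m. 1 / 2 * A m + 1 / 2 * B m)"
    by (simp add: fun_eq_iff field_simps)
  have "?nh (\<lambda>m. (A m + B m) / 2) \<le> \<bar>1 / 2\<bar> * ?nh A + \<bar>1 / 2\<bar> * ?nh B"
    unfolding avg by (rule norm_h_lincomb_le[OF hh])
  moreover have "?nh (?lap (\<lambda>m. (A m + B m) / 2)) \<le> \<bar>1 / 2\<bar> * ?nh (?lap A) + \<bar>1 / 2\<bar> * ?nh (?lap B)"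
    unfolding avg lap_h_lincomb by (rule norm_h_lincomb_le[OF hh])
  ultimately have "?nh (\<lambda>m. (A m + B m) / 2) + ?nh (?lap (\<lambda>m. (A m + B m) / 2))
      \<le> (?nh A + ?nh B + ?nh (?lap A) + ?nh (?lap B)) / 2"
    by simp
  moreover have "0 \<le> ?nh (\<lambda>m. (A m + B m) / 2) + ?nh (?lap (\<lambda>m. (A m + B m) / 2))"
    using norm_h_nonneg[OF hh] by (auto intro: add_nonneg_nonneg)
  ultimately have "(?nh (\<lambda>m. (A m + B m) / 2) + ?nh (?lap (\<lambda>m. (A m + B m) / 2)))\<^sup>2
      \<le> ((?nh A + ?nh B + ?nh (?lap A) + ?nh (?lap B)) / 2)\<^sup>2"
    by (rule power_mono)
  also have "\<dots> \<le> (?nh A)\<^sup>2 + (?nh B)\<^sup>2 + (?nh (?lap A))\<^sup>2 + (?nh (?lap B))\<^sup>2"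
    by (rule sq_half_sum4_le)
  finally show ?thesis .
qed

lemma norm_h_extrapolation_diff_le:
  assumes hh: "0 \<le> h1 * h2"
  shows "norm_h h1 h2 N1 N2 (\<lambda>m. (3 * X1 m - X0 m) / 2 - (3 * Y1 m - Y0 m) / 2)
    \<le> 3 / 2 * norm_h h1 h2 N1 N2 (\<lambda>m. X1 m - Y1 m) + 1 / 2 * norm_h h1 h2 N1 N2 (\<lambda>m. X0 m - Y0 m)"
proof -
  have extrapolation: "(\<lambda>m. (3 * X1 m - X0 m) / 2 - (3 * Y1 m - Y0 m) / 2)
      = (\<lambda>m. 3 / 2 * (X1 m - Y1 m) + (- 1 / 2) * (X0 m - Y0 m))"
    by (simp add: fun_eq_iff field_simps)
  have "norm_h h1 h2 N1 N2 (\<lambda>m. 3 / 2 * (X1 m - Y1 m) + (- 1 / 2) * (X0 m - Y0 m))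
      \<le> \<bar>3 / 2\<bar> * norm_h h1 h2 N1 N2 (\<lambda>m. X1 m - Y1 m) + \<bar>- 1 / 2\<bar> * norm_h h1 h2 N1 N2 (\<lambda>m. X0 m - Y0 m)"
    by (rule norm_h_lincomb_le[OF hh])
  then show ?thesis unfolding extrapolation by simp
qed

lemma le_const_mult_by_squares:
  fixes x K A S P Q R :: real
  assumes x: "x \<le> K * A * S" and nonneg: "0 \<le> K"
    and squares: "A\<^sup>2 \<le> P" "S\<^sup>2 \<le> Q" "P + Q \<le> 6 * R"
  shows "x \<le> (3 * K + 1) * R"
proof -
  have "2 * (A * S) \<le> A\<^sup>2 + S\<^sup>2" using sum_squares_bound[of A S] by (simp add: mult.assoc)
  then have AS: "A * S \<le> 3 * R" using squares by linarith
  have R0: "0 \<le> R" using squares zero_le_power2[of A] zero_le_power2[of S] by linarith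
  have "x \<le> K * (A * S)" using x by (simp add: mult.assoc)
  also have "\<dots> \<le> K * (3 * R)" using AS nonneg by (rule mult_left_mono)
  also have "\<dots> \<le> (3 * K + 1) * R" using R0 by (simp add: algebra_simps)
  finally show ?thesis .
qed

lemma level_bounds:
  assumes "\<forall>n\<le>M. norm_inf_h N1 N2 (U n) \<le> C0 \<and> norm_inf_h N1 N2 (V n) \<le> C0
                  \<and> sqrt (grad_norm_sq h1 h2 N1 N2 (V n)) \<le> C0"
    and "n \<le> M" "m < N1 * N2"
  shows "\<bar>U n m\<bar> \<le> \<bar>C0\<bar>" "\<bar>V n m\<bar> \<le> \<bar>C0\<bar>"
proof -
  have "norm_inf_h N1 N2 (U n) \<le> C0" "norm_inf_h N1 N2 (V n) \<le> C0" using assms(1,2) by auto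
  then have "\<bar>U n m\<bar> \<le> C0" "\<bar>V n m\<bar> \<le> C0" using abs_le_norm_inf_h assms(3) by blast+
  then show "\<bar>U n m\<bar> \<le> \<bar>C0\<bar>" "\<bar>V n m\<bar> \<le> \<bar>C0\<bar>" by auto
qed

lemma first_step_estimate:
  fixes U V :: "nat \<Rightarrow> nat \<Rightarrow> real"
  assumes l: "xL < xR" "yL < yR"
    and N: "0 < N1" "0 < N2" "even N1" "even N2" and M: "1 \<le> M"
    and bounds: "\<forall>n\<le>M. norm_inf_h N1 N2 (U n) \<le> C0 \<and> norm_inf_h N1 N2 (V n) \<le> C0
                  \<and> sqrt (grad_norm_sq h1 h2 N1 N2 (V n)) \<le> C0"
    and h: "h1 = (xR - xL) / real N1" "h2 = (yR - yL) / real N2"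
  shows "inner_h h1 h2 N1 N2
      (\<lambda>m. mat_vec (N1 * N2) (Dmat p xL xR yL yR N1 N2 (U 0)) (\<lambda>m. (U 1 m + U 0 m) / 2) m -
           mat_vec (N1 * N2) (Dmat p xL xR yL yR N1 N2 (V 0)) (\<lambda>m. (V 1 m + V 0 m) / 2) m)
      (\<lambda>m. (U 1 m - V 1 m + (U 0 m - V 0 m)) / 2)
    \<le> (3 * step_const p C0 (xR - xL) (yR - yL) + 1) *
       ((norm_h h1 h2 N1 N2 (\<lambda>m. U 0 m - V 0 m))\<^sup>2 +
        (norm_h h1 h2 N1 N2 (lap_h h1 h2 N1 N2 (\<lambda>m. U 0 m - V 0 m)))\<^sup>2 +
        (norm_h h1 h2 N1 N2 (\<lambda>m. U 1 m - V 1 m))\<^sup>2 +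
        (norm_h h1 h2 N1 N2 (lap_h h1 h2 N1 N2 (\<lambda>m. U 1 m - V 1 m)))\<^sup>2)"
proof -
  let ?nh = "norm_h h1 h2 N1 N2" and ?lap = "lap_h h1 h2 N1 N2"
  define a0 where "a0 = ?nh (\<lambda>m. U 0 m - V 0 m)"
  define a1 where "a1 = ?nh (\<lambda>m. U 1 m - V 1 m)"
  define g0 where "g0 = ?nh (?lap (\<lambda>m. U 0 m - V 0 m))"
  define g1 where "g1 = ?nh (?lap (\<lambda>m. U 1 m - V 1 m))"
  define S where "S = ?nh (\<lambda>m. (U 1 m - V 1 m + (U 0 m - V 0 m)) / 2)
    + ?nh (?lap (\<lambda>m. (U 1 m - V 1 m + (U 0 m - V 0 m)) / 2))"
  have hh: "0 \<le> h1 * h2" unfolding h using N l by simp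
  have step: "inner_h h1 h2 N1 N2
      (\<lambda>m. mat_vec (N1 * N2) (Dmat p xL xR yL yR N1 N2 (U 0)) (\<lambda>m. (U 1 m + U 0 m) / 2) m -
           mat_vec (N1 * N2) (Dmat p xL xR yL yR N1 N2 (V 0)) (\<lambda>m. (V 1 m + V 0 m) / 2) m)
      (\<lambda>m. (U 1 m - V 1 m + (U 0 m - V 0 m)) / 2)
    \<le> step_const p C0 (xR - xL) (yR - yL) * a0 * S"
    unfolding a0_def S_def
  proof (rule averaged_step_estimate[OF N l h])
    fix m assume m: "m < N1 * N2"
    have levels: "0 \<le> M" "1 \<le> M" using M by auto
    note level = level_bounds[OF bounds levels(1) m] level_bounds[OF bounds levels(2) m]
    show "\<bar>U 0 m\<bar> \<le> 2 * \<bar>C0\<bar>" "\<bar>V 0 m\<bar> \<le> 2 * \<bar>C0\<bar>"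
      "\<bar>V 1 m\<bar> \<le> \<bar>C0\<bar>" "\<bar>V 0 m\<bar> \<le> \<bar>C0\<bar>"
      using level abs_ge_zero[of C0] by linarith+
  next
    show "sqrt (grad_norm_sq h1 h2 N1 N2 (V 1)) \<le> C0" "sqrt (grad_norm_sq h1 h2 N1 N2 (V 0)) \<le> C0"
      using bounds M by auto
  qed
  have S_sq: "S\<^sup>2 \<le> a1\<^sup>2 + a0\<^sup>2 + g1\<^sup>2 + g0\<^sup>2"
    unfolding S_def a0_def a1_def g0_def g1_def by (rule sq_norm_h_average_le[OF hh])
  have sum_bound: "a0\<^sup>2 + (a1\<^sup>2 + a0\<^sup>2 + g1\<^sup>2 + g0\<^sup>2) \<le> 6 * (a0\<^sup>2 + g0\<^sup>2 + a1\<^sup>2 + g1\<^sup>2)"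
    using zero_le_power2[of a0] zero_le_power2[of a1] zero_le_power2[of g0] zero_le_power2[of g1] by (simp add: field_simps)
  have K0: "0 \<le> step_const p C0 (xR - xL) (yR - yL)" using step_const_nonneg l by simp
  show ?thesis
    using le_const_mult_by_squares[OF step K0 order_refl S_sq sum_bound]
    unfolding a0_def a1_def g0_def g1_def .
qed

lemma abs_extrapolation_le:
  fixes a b c :: real
  assumes "\<bar>a\<bar> \<le> c" "\<bar>b\<bar> \<le> c"
  shows "\<bar>(3 * a - b) / 2\<bar> \<le> 2 * c"
proof -
  have "\<bar>3 * a - b\<bar> \<le> \<bar>3 * a\<bar> + \<bar>b\<bar>" by (rule abs_triangle_ineq4)
  also have "\<dots> \<le> 3 * c + c" using assms by simp
  finally show ?thesis by simp
qed

lemma later_step_estimate: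
  fixes U V :: "nat \<Rightarrow> nat \<Rightarrow> real"
  assumes l: "xL < xR" "yL < yR"
    and N: "0 < N1" "0 < N2" "even N1" "even N2"
    and bounds: "\<forall>n\<le>M. norm_inf_h N1 N2 (U n) \<le> C0 \<and> norm_inf_h N1 N2 (V n) \<le> C0
                  \<and> sqrt (grad_norm_sq h1 h2 N1 N2 (V n)) \<le> C0"
    and h: "h1 = (xR - xL) / real N1" "h2 = (yR - yL) / real N2"
    and n: "1 \<le> n" "n \<le> M - 1"
  shows "inner_h h1 h2 N1 N2
      (\<lambda>m. mat_vec (N1 * N2) (Dmat p xL xR yL yR N1 N2 (\<lambda>m. (3 * U n m - U (n - 1) m) / 2)) (\<lambda>m. (U (n + 1) m + U n m) / 2) m -
           mat_vec (N1 * N2) (Dmat p xL xR yL yR N1 N2 (\<lambda>m. (3 * V n m - V (n - 1) m) / 2)) (\<lambda>m. (V (n + 1) m + V n m) / 2) m)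
      (\<lambda>m. (U (n + 1) m - V (n + 1) m + (U n m - V n m)) / 2)
    \<le> (3 * step_const p C0 (xR - xL) (yR - yL) + 1) *
       ((norm_h h1 h2 N1 N2 (\<lambda>m. U (n - 1) m - V (n - 1) m))\<^sup>2 +
        (norm_h h1 h2 N1 N2 (\<lambda>m. U n m - V n m))\<^sup>2 +
        (norm_h h1 h2 N1 N2 (\<lambda>m. U (n + 1) m - V (n + 1) m))\<^sup>2 +
        (norm_h h1 h2 N1 N2 (lap_h h1 h2 N1 N2 (\<lambda>m. U n m - V n m)))\<^sup>2 +
        (norm_h h1 h2 N1 N2 (lap_h h1 h2 N1 N2 (\<lambda>m. U (n + 1) m - V (n + 1) m)))\<^sup>2)"
proof -
  let ?nh = "norm_h h1 h2 N1 N2" and ?lap = "lap_h h1 h2 N1 N2"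
  define c where "c = ?nh (\<lambda>m. U (n - 1) m - V (n - 1) m)"
  define b where "b = ?nh (\<lambda>m. U n m - V n m)"
  define a where "a = ?nh (\<lambda>m. U (n + 1) m - V (n + 1) m)"
  define g where "g = ?nh (?lap (\<lambda>m. U n m - V n m))"
  define g' where "g' = ?nh (?lap (\<lambda>m. U (n + 1) m - V (n + 1) m))"
  define A where "A = ?nh (\<lambda>m. (3 * U n m - U (n - 1) m) / 2 - (3 * V n m - V (n - 1) m) / 2)"
  define S where "S = ?nh (\<lambda>m. (U (n + 1) m - V (n + 1) m + (U n m - V n m)) / 2)
    + ?nh (?lap (\<lambda>m. (U (n + 1) m - V (n + 1) m + (U n m - V n m)) / 2))"
  have hh: "0 \<le> h1 * h2" unfolding h using N l by simp
  have nonneg: "0 \<le> A" "0 \<le> b" "0 \<le> c"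
    unfolding A_def b_def c_def using norm_h_nonneg[OF hh] by auto
  have levels: "n - 1 \<le> M" "n \<le> M" "n + 1 \<le> M" using n by auto
  have step: "inner_h h1 h2 N1 N2
      (\<lambda>m. mat_vec (N1 * N2) (Dmat p xL xR yL yR N1 N2 (\<lambda>m. (3 * U n m - U (n - 1) m) / 2)) (\<lambda>m. (U (n + 1) m + U n m) / 2) m -
           mat_vec (N1 * N2) (Dmat p xL xR yL yR N1 N2 (\<lambda>m. (3 * V n m - V (n - 1) m) / 2)) (\<lambda>m. (V (n + 1) m + V n m) / 2) m)
      (\<lambda>m. (U (n + 1) m - V (n + 1) m + (U n m - V n m)) / 2)
    \<le> step_const p C0 (xR - xL) (yR - yL) * A * S"
    unfolding A_def S_def
  proof (rule averaged_step_estimate[OF N l h])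
    fix m assume m: "m < N1 * N2"
    note level = level_bounds[OF bounds levels(1) m] level_bounds[OF bounds levels(2) m]
      level_bounds[OF bounds levels(3) m]
    show "\<bar>(3 * U n m - U (n - 1) m) / 2\<bar> \<le> 2 * \<bar>C0\<bar>" "\<bar>(3 * V n m - V (n - 1) m) / 2\<bar> \<le> 2 * \<bar>C0\<bar>"
      using abs_extrapolation_le[OF level(3,1)] abs_extrapolation_le[OF level(4,2)] by simp_all
    show "\<bar>V (n + 1) m\<bar> \<le> \<bar>C0\<bar>" "\<bar>V n m\<bar> \<le> \<bar>C0\<bar>" using level by auto
  next
    show "sqrt (grad_norm_sq h1 h2 N1 N2 (V (n + 1))) \<le> C0" "sqrt (grad_norm_sq h1 h2 N1 N2 (V n)) \<le> C0"
      using bounds levels by auto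
  qed
  have "A \<le> 3 / 2 * b + 1 / 2 * c"
    unfolding A_def b_def c_def by (rule norm_h_extrapolation_diff_le[OF hh])
  then have "A\<^sup>2 \<le> (3 / 2 * b + 1 / 2 * c)\<^sup>2" using nonneg by (intro power_mono) auto
  also have "\<dots> \<le> 2 * (3 / 2 * b)\<^sup>2 + 2 * (1 / 2 * c)\<^sup>2" by (rule square_add_le)
  also have "\<dots> = 9 / 2 * b\<^sup>2 + 1 / 2 * c\<^sup>2" by (simp add: power_mult_distrib power_divide)
  finally have A_sq: "A\<^sup>2 \<le> 9 / 2 * b\<^sup>2 + 1 / 2 * c\<^sup>2" .
  have S_sq: "S\<^sup>2 \<le> a\<^sup>2 + b\<^sup>2 + g'\<^sup>2 + g\<^sup>2"
    unfolding S_def a_def b_def g_def g'_def by (rule sq_norm_h_average_le[OF hh])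
  have sum_bound: "9 / 2 * b\<^sup>2 + 1 / 2 * c\<^sup>2 + (a\<^sup>2 + b\<^sup>2 + g'\<^sup>2 + g\<^sup>2) \<le> 6 * (c\<^sup>2 + b\<^sup>2 + a\<^sup>2 + g\<^sup>2 + g'\<^sup>2)"
    using zero_le_power2[of a] zero_le_power2[of b] zero_le_power2[of c] zero_le_power2[of g]
      zero_le_power2[of g'] by (simp add: field_simps)
  have K0: "0 \<le> step_const p C0 (xR - xL) (yR - yL)" using step_const_nonneg l by simp
  show ?thesis
    using le_const_mult_by_squares[OF step K0 A_sq S_sq sum_bound]
    unfolding a_def b_def c_def g_def g'_def .
qed

theorem lemma3p2:
  fixes xL xR yL yR C0 :: real and p :: nat
  assumes "xL < xR" and "yL < yR" and "p \<ge> 1"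
  shows "\<exists>C > 0. \<forall>(N1::nat) (N2::nat) (M::nat) (U::nat \<Rightarrow> nat \<Rightarrow> real) (V::nat \<Rightarrow> nat \<Rightarrow> real).
    let h1 = (xR - xL) / real N1; h2 = (yR - yL) / real N2;
        ip = inner_h h1 h2 N1 N2; nh = norm_h h1 h2 N1 N2; lap = lap_h h1 h2 N1 N2;
        DD = (\<lambda>W X. mat_vec (N1 * N2) (Dmat p xL xR yL yR N1 N2 W) X);
        eta = (\<lambda>n m. U n m - V n m);
        half = (\<lambda>W n m. (W (n + 1) m + W n m) / 2);
        hat = (\<lambda>W n m. (3 * W n m - W (n - 1) m) / 2)
    in (N1 > 0 \<and> N2 > 0 \<and> even N1 \<and> even N2 \<and> M \<ge> 1 \<and>
        (\<forall>n \<le> M. nh (U n) \<le> C0 \<and> sqrt (grad_norm_sq h1 h2 N1 N2 (U n)) \<le> C0 \<and>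
                  nh (lap (U n)) \<le> C0 \<and> norm_inf_h N1 N2 (U n) \<le> C0 \<and>
                  nh (V n) \<le> C0 \<and> sqrt (grad_norm_sq h1 h2 N1 N2 (V n)) \<le> C0 \<and>
                  nh (lap (V n)) \<le> C0 \<and> norm_inf_h N1 N2 (V n) \<le> C0))
     \<longrightarrow>
       ip (\<lambda>m. DD (U 0) (half U 0) m - DD (V 0) (half V 0) m) (half eta 0)
         \<le> C * ((nh (eta 0))\<^sup>2 + (nh (lap (eta 0)))\<^sup>2 + (nh (eta 1))\<^sup>2 + (nh (lap (eta 1)))\<^sup>2)
     \<and> (\<forall>n. 1 \<le> n \<and> n \<le> M - 1 \<longrightarrow>
         ip (\<lambda>m. DD (hat U n) (half U n) m - DD (hat V n) (half V n) m) (half eta n)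
           \<le> C * ((nh (eta (n - 1)))\<^sup>2 + (nh (eta n))\<^sup>2 + (nh (eta (n + 1)))\<^sup>2
                  + (nh (lap (eta n)))\<^sup>2 + (nh (lap (eta (n + 1))))\<^sup>2))"
proof -
  define C where "C = 3 * step_const p C0 (xR - xL) (yR - yL) + 1"
  have "0 \<le> step_const p C0 (xR - xL) (yR - yL)" using step_const_nonneg assms(1,2) by simp
  then have "0 < C" unfolding C_def by simp
  show ?thesis
    unfolding Let_def add_0_left
    apply (intro exI[of _ C] conjI allI impI; (elim conjE)?)
    subgoal by fact
    subgoal unfolding C_def by (rule first_step_estimate[OF assms(1,2)]) (assumption | blast | rule refl)+
    subgoal unfolding C_def by (rule later_step_estimate[OF assms(1,2)]) (assumption | blast | rule refl)+
    done
qed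

end
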